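(* Let $E$ be an arbitrary directed graph and $K$ a field with involution. The Leavitt path algebra $L_K(E)$ is positive definite if and only if $K$ is positive definite.
   Context: A directed graph $E=(E^0,E^1,s,r)$ has vertex set $E^0$, edge set $E^1$ (arbitrary cardinalities) and source/range maps $s,r:E^1\to E^0$. A vertex $v$ is regular if $s^{-1}(v)$ is nonempty and finite. For a field $K$, $L_K(E)$ is the free $K$-algebra on $E^0\cup E^1\cup\{e^*: e\in E^1\}$ modulo: $vw=\delta_{v,w}v$ for $v,w\in E^0$; $s(e)e=er(e)=e$; $r(e)e^*=e^*s(e)=e^*$; $e^*f=\delta_{e,f}r(e)$ for $e,f\in E^1$; $v=\sum_{e\in s^{-1}(v)}ee^*$ for every regular vertex $v$. If $K$ has an involution $k\mapsto k^*$ (e.g. the identity), $L_K(E)$ is a $*$-algebra via $(\sum k_ia_ib_i^* )^*=\sum k_i^*b_ia_i^*$ for paths $a_i,b_i$ (with $(e_1\cdots e_n)^*=e_n^*\cdots e_1^*$, $v^*=v$). A $*$-ring (or $*$-field) is positive definite if for all $n$ and $x_1,\dots,x_n$, $\sum_{i=1}^n x_ix_i^*=0$ implies $x_i=0$ for all $i$. *)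

theory Defs
  imports Main
begin

text \<open>Generators of the free algebra: vertices, real edges, ghost edges (e^*).\<close>
datatype ('v, 'e) gen = Vx 'v | Ex 'e | Gx 'e

fun gstar :: "('v, 'e) gen \<Rightarrow> ('v, 'e) gen" where
  "gstar (Vx v) = Vx v"
| "gstar (Ex e) = Gx e"
| "gstar (Gx e) = Ex e"

text \<open>Elements of the (non-unital) free K-algebra on the generators are finitely
supported coefficient functions on nonempty words.\<close>
type_synonym ('v, 'e, 'k) fa = "('v, 'e) gen list \<Rightarrow> 'k"

definition gens :: "'v set \<Rightarrow> 'e set \<Rightarrow> ('v, 'e) gen set" where
  "gens V E1 = Vx ` V \<union> Ex ` E1 \<union> Gx ` E1"

definition fa_elems :: "'v set \<Rightarrow> 'e set \<Rightarrow> ('v, 'e, 'k::field) fa set" where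
  "fa_elems V E1 = {p. finite {w. p w \<noteq> 0} \<and>
      (\<forall>w. p w \<noteq> 0 \<longrightarrow> w \<noteq> [] \<and> set w \<subseteq> gens V E1)}"

definition fa_zero :: "('v, 'e, 'k::field) fa" where
  "fa_zero = (\<lambda>w. 0)"

definition fa_add :: "('v, 'e, 'k::field) fa \<Rightarrow> ('v, 'e, 'k) fa \<Rightarrow> ('v, 'e, 'k) fa" where
  "fa_add p q = (\<lambda>w. p w + q w)"

definition fa_diff :: "('v, 'e, 'k::field) fa \<Rightarrow> ('v, 'e, 'k) fa \<Rightarrow> ('v, 'e, 'k) fa" where
  "fa_diff p q = (\<lambda>w. p w - q w)"

definition fa_smult :: "'k::field \<Rightarrow> ('v, 'e, 'k) fa \<Rightarrow> ('v, 'e, 'k) fa" where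
  "fa_smult c p = (\<lambda>w. c * p w)"

definition fa_mult :: "('v, 'e, 'k::field) fa \<Rightarrow> ('v, 'e, 'k) fa \<Rightarrow> ('v, 'e, 'k) fa" where
  "fa_mult p q = (\<lambda>w. \<Sum>(u, v)\<in>{(u, v). u @ v = w}. p u * q v)"

definition mono :: "('v, 'e) gen list \<Rightarrow> ('v, 'e, 'k::field) fa" where
  "mono w0 = (\<lambda>w. if w = w0 then 1 else 0)"

text \<open>The involution on the free algebra induced by the involution of K:
(k g_1 ... g_n)^* = k^* g_n^* ... g_1^*, with v^* = v, (e)^* = e^*, (e^*)^* = e.\<close>
definition fa_star :: "('k \<Rightarrow> 'k) \<Rightarrow> ('v, 'e, 'k::field) fa \<Rightarrow> ('v, 'e, 'k) fa" where
  "fa_star cj p = (\<lambda>w. cj (p (map gstar (rev w))))"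

definition regular :: "'e set \<Rightarrow> ('e \<Rightarrow> 'v) \<Rightarrow> 'v \<Rightarrow> bool" where
  "regular E1 s v \<longleftrightarrow> {e \<in> E1. s e = v} \<noteq> {} \<and> finite {e \<in> E1. s e = v}"

text \<open>The defining relations of the Leavitt path algebra, as elements (lhs - rhs)
of the free algebra.\<close>
definition lpa_rels :: "'v set \<Rightarrow> 'e set \<Rightarrow> ('e \<Rightarrow> 'v) \<Rightarrow> ('e \<Rightarrow> 'v)
    \<Rightarrow> ('v, 'e, 'k::field) fa set" where
  "lpa_rels V E1 s r =
     {fa_diff (mono [Vx v, Vx w]) (if v = w then mono [Vx v] else fa_zero) | v w. v \<in> V \<and> w \<in> V}
   \<union> {fa_diff (mono [Vx (s e), Ex e]) (mono [Ex e]) | e. e \<in> E1}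
   \<union> {fa_diff (mono [Ex e, Vx (r e)]) (mono [Ex e]) | e. e \<in> E1}
   \<union> {fa_diff (mono [Vx (r e), Gx e]) (mono [Gx e]) | e. e \<in> E1}
   \<union> {fa_diff (mono [Gx e, Vx (s e)]) (mono [Gx e]) | e. e \<in> E1}
   \<union> {fa_diff (mono [Gx e, Ex f]) (if e = f then mono [Vx (r e)] else fa_zero) | e f. e \<in> E1 \<and> f \<in> E1}
   \<union> {fa_diff (mono [Vx v]) (\<lambda>w. \<Sum>e\<in>{e \<in> E1. s e = v}. mono [Ex e, Gx e] w) | v.
        v \<in> V \<and> regular E1 s v}"

inductive_set lpa_ideal :: "'v set \<Rightarrow> 'e set \<Rightarrow> ('e \<Rightarrow> 'v) \<Rightarrow> ('e \<Rightarrow> 'v)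
    \<Rightarrow> ('v, 'e, 'k::field) fa set"
  for V E1 s r where
  zero: "fa_zero \<in> lpa_ideal V E1 s r"
| rel: "x \<in> lpa_rels V E1 s r \<Longrightarrow> x \<in> lpa_ideal V E1 s r"
| add: "x \<in> lpa_ideal V E1 s r \<Longrightarrow> y \<in> lpa_ideal V E1 s r \<Longrightarrow> fa_add x y \<in> lpa_ideal V E1 s r"
| smult: "x \<in> lpa_ideal V E1 s r \<Longrightarrow> fa_smult c x \<in> lpa_ideal V E1 s r"
| left: "x \<in> lpa_ideal V E1 s r \<Longrightarrow> p \<in> fa_elems V E1 \<Longrightarrow> fa_mult p x \<in> lpa_ideal V E1 s r"
| right: "x \<in> lpa_ideal V E1 s r \<Longrightarrow> p \<in> fa_elems V E1 \<Longrightarrow> fa_mult x p \<in> lpa_ideal V E1 s r"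

definition is_graph :: "'v set \<Rightarrow> 'e set \<Rightarrow> ('e \<Rightarrow> 'v) \<Rightarrow> ('e \<Rightarrow> 'v) \<Rightarrow> bool" where
  "is_graph V E1 s r \<longleftrightarrow> s ` E1 \<subseteq> V \<and> r ` E1 \<subseteq> V"

definition field_involution :: "('k::field \<Rightarrow> 'k) \<Rightarrow> bool" where
  "field_involution cj \<longleftrightarrow> (\<forall>a b. cj (a + b) = cj a + cj b) \<and>
     (\<forall>a b. cj (a * b) = cj a * cj b) \<and> (\<forall>a. cj (cj a) = a)"

definition pos_def_field :: "('k::field \<Rightarrow> 'k) \<Rightarrow> bool" where
  "pos_def_field cj \<longleftrightarrow>
     (\<forall>(n::nat) (x::nat \<Rightarrow> 'k). (\<Sum>i<n. x i * cj (x i)) = 0 \<longrightarrow> (\<forall>i<n. x i = 0))"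

text \<open>L_K(E) is positive definite: for elements x_1..x_n of L_K(E) (represented by
elements of the free algebra, equality in L_K(E) = congruence modulo the ideal),
sum x_i x_i^* = 0 in L_K(E) implies x_i = 0 in L_K(E).\<close>
definition pos_def_lpa :: "'v set \<Rightarrow> 'e set \<Rightarrow> ('e \<Rightarrow> 'v) \<Rightarrow> ('e \<Rightarrow> 'v) \<Rightarrow> ('k::field \<Rightarrow> 'k) \<Rightarrow> bool" where
  "pos_def_lpa V E1 s r cj \<longleftrightarrow>
     (\<forall>(n::nat) (x::nat \<Rightarrow> ('v, 'e, 'k) fa).
        (\<forall>i<n. x i \<in> fa_elems V E1) \<longrightarrow>
        (\<lambda>w. \<Sum>i<n. fa_mult (x i) (fa_star cj (x i)) w) \<in> lpa_ideal V E1 s r \<longrightarrow>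
        (\<forall>i<n. x i \<in> lpa_ideal V E1 s r))"

end

theory Submission
  imports Defs
begin

text \<open>L_K(E) acts by partial maps on boundary states: pairs of a boundary path (a finite path
  ending at a sink or infinite emitter, or an infinite path) and an integer. Vertices act as
  projections, edges prepend themselves and ghost edges strip themselves off; all Leavitt
  relations hold, so each x gets a K-valued matrix rep x. This representation is faithful:
  every element is congruent to a combination of normal words \<mu> \<nu>^*, and after rewriting
  the words of lowest ghost length by the Cuntz-Krieger relation, a nonzero combination is
  detected by a matrix coefficient. The diagonal coefficient of x x^* at z is the sum of
  rep x (d, z) * cj (rep x (d, z)) over d, so if K is positive definite and the sum of the
  x_i x_i^* vanishes, every coefficient of every x_i vanishes and faithfulness gives x_i = 0.
  Conversely, a multiple k v of a vertex is zero only for k = 0, which transfers positive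
  definiteness from L_K(E) back to K.\<close>

section \<open>The free algebra\<close>

lemma finite_append_splits: "finite {(u, v). u @ v = (w::'a list)}"
proof -
  have "{(u, v). u @ v = w} \<subseteq> (\<lambda>i. (take i w, drop i w)) ` {0..length w}"
  proof
    fix x assume "x \<in> {(u, v). u @ v = w}"
    then obtain u v where x: "x = (u, v)" "w = u @ v" by auto
    then show "x \<in> (\<lambda>i. (take i w, drop i w)) ` {0..length w}"
      by (intro image_eqI[where x="length u"]) auto
  qed
  then show ?thesis by (rule finite_subset) simp
qed

lemma fa_mult_mono: "fa_mult (mono a) (mono b) = (mono (a @ b) :: ('v,'e,'k::field) fa)"
proof
  fix w :: "('v,'e) gen list"
  have "fa_mult (mono a) (mono b) w =
      (\<Sum>x\<in>{(u, v). u @ v = w}. if x = (a, b) then 1 else 0 :: 'k)"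
    unfolding fa_mult_def mono_def by (intro sum.cong) (auto split: if_splits)
  also have "\<dots> = mono (a @ b) w"
    using finite_append_splits[of w] by (auto simp: sum.delta' mono_def)
  finally show "fa_mult (mono a) (mono b) w = (mono (a @ b) w :: 'k)" .
qed

lemma fa_mult_diff_right: "fa_mult x (fa_diff p q) = fa_diff (fa_mult x p) (fa_mult x q)"
  unfolding fa_mult_def fa_diff_def
  by (rule ext) (simp add: split_def right_diff_distrib sum_subtractf)

lemma fa_mult_diff_left: "fa_mult (fa_diff p q) x = fa_diff (fa_mult p x) (fa_mult q x)"
  unfolding fa_mult_def fa_diff_def
  by (rule ext) (simp add: split_def left_diff_distrib sum_subtractf)

lemma fa_mult_zero_left [simp]: "fa_mult fa_zero x = fa_zero"
  unfolding fa_mult_def fa_zero_def by (rule ext) simp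

lemma fa_mult_zero_right [simp]: "fa_mult x fa_zero = fa_zero"
  unfolding fa_mult_def fa_zero_def by (rule ext) simp

lemma fa_mult_smult: "fa_mult (fa_smult a p) (fa_smult b q) = fa_smult (a * b) (fa_mult p q)"
  unfolding fa_mult_def fa_smult_def
  by (rule ext) (simp add: split_def sum_distrib_left mult_ac)

lemma fa_mult_lincomb_right:
  "fa_mult x (\<lambda>w. \<Sum>i\<in>F. c i * f i w) = (\<lambda>w. \<Sum>i\<in>F. c i * fa_mult x (f i) w)"
  unfolding fa_mult_def
  by (rule ext) (simp add: split_def sum_distrib_left sum_distrib_right mult_ac
      flip: sum.swap[where A=F])

lemma fa_mult_lincomb_left:
  "fa_mult (\<lambda>w. \<Sum>i\<in>F. c i * f i w) x = (\<lambda>w. \<Sum>i\<in>F. c i * fa_mult (f i) x w)"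
  unfolding fa_mult_def
  by (rule ext) (simp add: split_def sum_distrib_left sum_distrib_right mult_ac
      flip: sum.swap[where A=F])

lemma fa_mult_nonzeroD:
  assumes "fa_mult p q w \<noteq> 0"
  shows "\<exists>u v. w = u @ v \<and> p u \<noteq> 0 \<and> q v \<noteq> 0"
proof -
  from assms obtain x where "x \<in> {(u, v). u @ v = w}" "(case x of (u, v) \<Rightarrow> p u * q v) \<noteq> 0"
    unfolding fa_mult_def by (meson sum.not_neutral_contains_not_neutral)
  then show ?thesis by (cases x) auto
qed

lemma finite_mult_supp:
  assumes "finite {w. p w \<noteq> 0}" "finite {w. q w \<noteq> 0}"
  shows "finite {w. fa_mult p q w \<noteq> 0}"
proof -
  have "{w. fa_mult p q w \<noteq> 0} \<subseteq> (\<lambda>(u, v). u @ v) ` ({w. p w \<noteq> 0} \<times> {w. q w \<noteq> 0})"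
    using fa_mult_nonzeroD by fastforce
  then show ?thesis using assms finite_subset by blast
qed

lemma finite_mono_supp: "finite {w'. (mono w :: ('v,'e,'k::field) fa) w' \<noteq> 0}"
  by (rule finite_subset[of _ "{w}"]) (auto simp: mono_def)

lemma finite_sum_supp:
  assumes "finite F" "\<And>i. i \<in> F \<Longrightarrow> finite {w. f i w \<noteq> 0}"
  shows "finite {w. (\<Sum>i\<in>F. f i w) \<noteq> 0}"
proof (rule finite_subset)
  show "{w. (\<Sum>i\<in>F. f i w) \<noteq> 0} \<subseteq> (\<Union>i\<in>F. {w. f i w \<noteq> 0})"
    by (auto dest: sum.not_neutral_contains_not_neutral)
qed (use assms in auto)

lemma gens_simps [simp]:
  "Vx a \<in> gens V E1 \<longleftrightarrow> a \<in> V" "Ex e \<in> gens V E1 \<longleftrightarrow> e \<in> E1" "Gx e \<in> gens V E1 \<longleftrightarrow> e \<in> E1"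
  unfolding gens_def by auto

lemma fa_elemsI:
  "finite {w. p w \<noteq> 0} \<Longrightarrow> (\<And>w. p w \<noteq> 0 \<Longrightarrow> w \<noteq> [] \<and> set w \<subseteq> gens V E1)
   \<Longrightarrow> p \<in> fa_elems V E1"
  unfolding fa_elems_def by auto

lemma fa_elemsD:
  "p \<in> fa_elems V E1 \<Longrightarrow> finite {w. p w \<noteq> 0}"
  "p \<in> fa_elems V E1 \<Longrightarrow> p w \<noteq> 0 \<Longrightarrow> w \<noteq> []"
  "p \<in> fa_elems V E1 \<Longrightarrow> p w \<noteq> 0 \<Longrightarrow> set w \<subseteq> gens V E1"
  unfolding fa_elems_def by auto

lemma fa_elems_supp_subset:
  assumes p: "p \<in> fa_elems V E1" and q: "q \<in> fa_elems V E1"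
    and f: "\<And>w. f w \<noteq> 0 \<Longrightarrow> p w \<noteq> 0 \<or> q w \<noteq> 0"
  shows "f \<in> fa_elems V E1"
proof (rule fa_elemsI)
  have "{w. f w \<noteq> 0} \<subseteq> {w. p w \<noteq> 0} \<union> {w. q w \<noteq> 0}" using f by blast
  then show "finite {w. f w \<noteq> 0}"
    using fa_elemsD(1)[OF p] fa_elemsD(1)[OF q] by (meson finite_UnI finite_subset)
qed (use f fa_elemsD(2,3)[OF p] fa_elemsD(2,3)[OF q] in blast)

lemma fa_elems_add: "p \<in> fa_elems V E1 \<Longrightarrow> q \<in> fa_elems V E1 \<Longrightarrow> fa_add p q \<in> fa_elems V E1"
  by (rule fa_elems_supp_subset[of p _ _ q]) (auto simp: fa_add_def)

lemma fa_elems_diff: "p \<in> fa_elems V E1 \<Longrightarrow> q \<in> fa_elems V E1 \<Longrightarrow> fa_diff p q \<in> fa_elems V E1"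
  by (rule fa_elems_supp_subset[of p _ _ q]) (auto simp: fa_diff_def)

lemma fa_elems_smult: "p \<in> fa_elems V E1 \<Longrightarrow> fa_smult c p \<in> fa_elems V E1"
  by (rule fa_elems_supp_subset[of p _ _ p]) (auto simp: fa_smult_def)

lemma fa_elems_mult:
  assumes p: "p \<in> fa_elems V E1" and q: "q \<in> fa_elems V E1"
  shows "fa_mult p q \<in> fa_elems V E1"
proof (rule fa_elemsI)
  show "finite {w. fa_mult p q w \<noteq> 0}"
    using finite_mult_supp fa_elemsD(1) p q by blast
next
  fix w assume "fa_mult p q w \<noteq> 0"
  then obtain u v where "w = u @ v" "p u \<noteq> 0" "q v \<noteq> 0" using fa_mult_nonzeroD by blast
  then show "w \<noteq> [] \<and> set w \<subseteq> gens V E1"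
    using fa_elemsD[OF p] fa_elemsD[OF q] by auto
qed

lemma fa_elems_zero: "fa_zero \<in> fa_elems V E1"
  by (rule fa_elemsI) (auto simp: fa_zero_def)

lemma fa_elems_mono:
  "w \<noteq> [] \<Longrightarrow> set w \<subseteq> gens V E1 \<Longrightarrow> (mono w :: ('v,'e,'k::field) fa) \<in> fa_elems V E1"
  by (rule fa_elemsI) (auto simp: mono_def split: if_splits)

lemma fa_elems_lincomb:
  assumes "finite F" "\<And>i. i \<in> F \<Longrightarrow> f i \<in> fa_elems V E1"
  shows "(\<lambda>w. \<Sum>i\<in>F. c i * f i w) \<in> fa_elems V E1"
  using assms
proof (induction F rule: finite_induct)
  case empty
  then show ?case using fa_elems_zero by (simp add: fa_zero_def)
next
  case (insert x F)
  have "(\<lambda>w. \<Sum>i\<in>insert x F. c i * f i w) = fa_add (fa_smult (c x) (f x)) (\<lambda>w. \<Sum>i\<in>F. c i * f i w)"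
    using insert by (auto simp: fa_add_def fa_smult_def)
  then show ?case using insert by (auto intro!: fa_elems_add fa_elems_smult)
qed

lemma fa_elems_sum:
  assumes "finite F" "\<And>i. i \<in> F \<Longrightarrow> f i \<in> fa_elems V E1"
  shows "(\<lambda>w. \<Sum>i\<in>F. f i w) \<in> fa_elems V E1"
  using fa_elems_lincomb[OF assms, where c="\<lambda>_. 1"] by simp

lemma fa_expansion:
  assumes "finite {w. p w \<noteq> 0}"
  shows "p = (\<lambda>x. \<Sum>w\<in>{w. p w \<noteq> 0}. p w * mono w x)"
proof
  fix x
  have "(\<Sum>w\<in>{w. p w \<noteq> 0}. p w * mono w x) = (\<Sum>w\<in>{w. p w \<noteq> 0}. if w = x then p x else 0)"
    by (intro sum.cong) (auto simp: mono_def)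
  also have "\<dots> = p x" using assms by (simp add: sum.delta')
  finally show "p x = (\<Sum>w\<in>{w. p w \<noteq> 0}. p w * mono w x)" by simp
qed

section \<open>Congruence modulo the Leavitt ideal\<close>

locale lpa_graph =
  fixes V :: "'v set" and E1 :: "'e set" and s r :: "'e \<Rightarrow> 'v"
  assumes graph: "is_graph V E1 s r"
begin

lemma s_in_V [simp]: "e \<in> E1 \<Longrightarrow> s e \<in> V" and r_in_V [simp]: "e \<in> E1 \<Longrightarrow> r e \<in> V"
  using graph unfolding is_graph_def by auto

lemma lpa_rels_elems: "x \<in> lpa_rels V E1 s r \<Longrightarrow> (x :: ('v,'e,'k::field) fa) \<in> fa_elems V E1"
  unfolding lpa_rels_def
  by (elim UnE; auto intro!: fa_elems_diff fa_elems_mono fa_elems_zero fa_elems_sum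
      simp: regular_def)

lemma lpa_ideal_elems: "x \<in> lpa_ideal V E1 s r \<Longrightarrow> x \<in> fa_elems V E1"
  by (induction rule: lpa_ideal.induct)
    (auto intro: fa_elems_zero lpa_rels_elems fa_elems_add fa_elems_smult fa_elems_mult)

definition cong :: "('v,'e,'k::field) fa \<Rightarrow> ('v,'e,'k) fa \<Rightarrow> bool" where
  "cong p q \<longleftrightarrow> fa_diff p q \<in> lpa_ideal V E1 s r"

lemma cong_refl: "cong p p"
proof -
  have "fa_diff p p = fa_zero" by (auto simp: fa_diff_def fa_zero_def)
  then show ?thesis unfolding cong_def by (auto intro: lpa_ideal.intros)
qed

lemma cong_sym: "cong p q \<Longrightarrow> cong q p"
proof -
  assume "cong p q"
  moreover have "fa_diff q p = fa_smult (-1) (fa_diff p q)"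
    by (auto simp: fa_diff_def fa_smult_def)
  ultimately show ?thesis unfolding cong_def by (auto intro: lpa_ideal.intros)
qed

lemma cong_trans: "cong p q \<Longrightarrow> cong q t \<Longrightarrow> cong p t"
proof -
  assume "cong p q" "cong q t"
  moreover have "fa_diff p t = fa_add (fa_diff p q) (fa_diff q t)"
    by (auto simp: fa_diff_def fa_add_def)
  ultimately show ?thesis unfolding cong_def by (auto intro: lpa_ideal.intros)
qed

lemma cong_ideal: "cong p q \<Longrightarrow> q \<in> lpa_ideal V E1 s r \<Longrightarrow> p \<in> lpa_ideal V E1 s r"
proof -
  assume "cong p q" "q \<in> lpa_ideal V E1 s r"
  moreover have "p = fa_add (fa_diff p q) q"
    by (auto simp: fa_diff_def fa_add_def)
  ultimately show ?thesis unfolding cong_def by (metis lpa_ideal.add)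
qed

lemma cong_lincomb:
  assumes "finite F" "\<And>i. i \<in> F \<Longrightarrow> cong (f i) (g i)"
  shows "cong (\<lambda>w. \<Sum>i\<in>F. c i * f i w) (\<lambda>w. \<Sum>i\<in>F. c i * g i w)"
  using assms
proof (induction F rule: finite_induct)
  case empty
  then show ?case using cong_refl by simp
next
  case (insert x F)
  have "fa_diff (\<lambda>w. \<Sum>i\<in>insert x F. c i * f i w) (\<lambda>w. \<Sum>i\<in>insert x F. c i * g i w)
     = fa_add (fa_smult (c x) (fa_diff (f x) (g x)))
        (fa_diff (\<lambda>w. \<Sum>i\<in>F. c i * f i w) (\<lambda>w. \<Sum>i\<in>F. c i * g i w))"
    using insert by (auto simp: fa_add_def fa_smult_def fa_diff_def algebra_simps)
  then show ?case using insert unfolding cong_def by (auto intro: lpa_ideal.intros)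
qed

text \<open>The free algebra has no unit, so multiplying by an empty word means doing nothing.\<close>
definition sandwich :: "('v,'e) gen list \<Rightarrow> ('v,'e) gen list \<Rightarrow> ('v,'e,'k::field) fa \<Rightarrow> ('v,'e,'k) fa" where
  "sandwich A B p = (let p1 = (if A = [] then p else fa_mult (mono A) p) in
      (if B = [] then p1 else fa_mult p1 (mono B)))"

lemma cong_sandwich:
  assumes "cong p q" "set A \<subseteq> gens V E1" "set B \<subseteq> gens V E1"
  shows "cong (sandwich A B p) (sandwich A B q)"
proof -
  have left: "cong (if A = [] then p else fa_mult (mono A) p) (if A = [] then q else fa_mult (mono A) q)"
    using assms unfolding cong_def
    by (auto simp: fa_mult_diff_right[symmetric] intro!: lpa_ideal.left fa_elems_mono)
  then show ?thesis
    using assms unfolding cong_def sandwich_def Let_def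
    by (auto simp: fa_mult_diff_left[symmetric] intro!: lpa_ideal.right fa_elems_mono)
qed

lemma sandwich_mono: "sandwich A B (mono m) = mono (A @ m @ B)"
  unfolding sandwich_def Let_def by (auto simp: fa_mult_mono)

lemma sandwich_zero: "sandwich A B fa_zero = fa_zero"
  unfolding sandwich_def Let_def by auto

lemma sandwich_lincomb:
  "sandwich A B (\<lambda>w. \<Sum>i\<in>F. c i * mono (m i) w) = (\<lambda>w. \<Sum>i\<in>F. c i * mono (A @ m i @ B) w)"
  unfolding sandwich_def Let_def
  by (auto simp: fa_mult_lincomb_right fa_mult_lincomb_left fa_mult_mono)

lemma cong_mono_context:
  "cong (mono m) (mono m' :: ('v,'e,'k::field) fa) \<Longrightarrow> set A \<subseteq> gens V E1 \<Longrightarrow> set B \<subseteq> gens V E1 \<Longrightarrow>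
   cong (mono (A @ m @ B)) (mono (A @ m' @ B) :: ('v,'e,'k) fa)"
  using cong_sandwich[of "mono m :: ('v,'e,'k) fa" "mono m'" A B] by (simp only: sandwich_mono)

lemma cong_zero_context:
  "cong (mono m) (fa_zero :: ('v,'e,'k::field) fa) \<Longrightarrow> set A \<subseteq> gens V E1 \<Longrightarrow> set B \<subseteq> gens V E1 \<Longrightarrow>
   cong (mono (A @ m @ B)) (fa_zero :: ('v,'e,'k::field) fa)"
  using cong_sandwich[of "mono m :: ('v,'e,'k) fa" "fa_zero" A B] by (simp only: sandwich_mono sandwich_zero)

lemma cong_lincomb_context:
  "cong (mono m) (\<lambda>w. \<Sum>i\<in>F. c i * mono (ms i) w :: 'k::field) \<Longrightarrow>
   set A \<subseteq> gens V E1 \<Longrightarrow> set B \<subseteq> gens V E1 \<Longrightarrow>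
   cong (mono (A @ m @ B)) (\<lambda>w. \<Sum>i\<in>F. c i * mono (A @ ms i @ B) w :: 'k)"
  using cong_sandwich[of "mono m :: ('v,'e,'k) fa" "\<lambda>w. \<Sum>i\<in>F. c i * mono (ms i) w" A B]
  by (simp only: sandwich_mono sandwich_lincomb)

lemma cong_relI: "fa_diff p q \<in> lpa_rels V E1 s r \<Longrightarrow> cong p q"
  unfolding cong_def by (rule lpa_ideal.rel)

lemma cong_vertex_idem: "a \<in> V \<Longrightarrow> cong (mono [Vx a, Vx a]) (mono [Vx a] :: ('v,'e,'k::field) fa)"
  by (rule cong_relI) (unfold lpa_rels_def, intro UnI1 CollectI, auto)

lemma cong_vertex_orth:
  "a \<in> V \<Longrightarrow> b \<in> V \<Longrightarrow> a \<noteq> b \<Longrightarrow> cong (mono [Vx a, Vx b]) (fa_zero :: ('v,'e,'k::field) fa)"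
  by (rule cong_relI) (unfold lpa_rels_def, intro UnI1 CollectI, auto)

lemma cong_source_edge: "e \<in> E1 \<Longrightarrow> cong (mono [Vx (s e), Ex e]) (mono [Ex e] :: ('v,'e,'k::field) fa)"
  by (rule cong_relI) (unfold lpa_rels_def, intro UnI1 UnI2 CollectI, auto)

lemma cong_edge_range: "e \<in> E1 \<Longrightarrow> cong (mono [Ex e, Vx (r e)]) (mono [Ex e] :: ('v,'e,'k::field) fa)"
  by (rule cong_relI) (unfold lpa_rels_def, intro UnI1 UnI2 CollectI, auto)

lemma cong_range_ghost: "e \<in> E1 \<Longrightarrow> cong (mono [Vx (r e), Gx e]) (mono [Gx e] :: ('v,'e,'k::field) fa)"
  by (rule cong_relI) (unfold lpa_rels_def, intro UnI1 UnI2 CollectI, auto)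

lemma cong_ghost_source: "e \<in> E1 \<Longrightarrow> cong (mono [Gx e, Vx (s e)]) (mono [Gx e] :: ('v,'e,'k::field) fa)"
  by (rule cong_relI) (unfold lpa_rels_def, intro UnI1 UnI2 CollectI, auto)

lemma cong_ghost_edge: "e \<in> E1 \<Longrightarrow> cong (mono [Gx e, Ex e]) (mono [Vx (r e)] :: ('v,'e,'k::field) fa)"
  by (rule cong_relI) (unfold lpa_rels_def, intro UnI1 UnI2 CollectI, auto)

lemma cong_ghost_edge_orth:
  "e \<in> E1 \<Longrightarrow> f \<in> E1 \<Longrightarrow> e \<noteq> f \<Longrightarrow> cong (mono [Gx e, Ex f]) (fa_zero :: ('v,'e,'k::field) fa)"
  by (rule cong_relI) (unfold lpa_rels_def, intro UnI1 UnI2 CollectI, auto)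

lemma cong_CK2: "v \<in> V \<Longrightarrow> regular E1 s v \<Longrightarrow>
  cong (mono [Vx v]) (\<lambda>w. \<Sum>e\<in>{e \<in> E1. s e = v}. mono [Ex e, Gx e] w :: 'k::field)"
  by (rule cong_relI) (unfold lpa_rels_def, intro UnI2 CollectI, auto)

lemma cong_vertex_edge_zero: assumes "a \<in> V" "e \<in> E1" "a \<noteq> s e"
  shows "cong (mono [Vx a, Ex e]) (fa_zero :: ('v,'e,'k::field) fa)"
proof -
  have 1: "cong (mono [Vx a, Ex e]) (mono [Vx a, Vx (s e), Ex e] :: ('v,'e,'k) fa)"
    using cong_mono_context[OF cong_sym[OF cong_source_edge[OF assms(2)]], of "[Vx a]" "[]"] assms by simp
  have 2: "cong (mono [Vx a, Vx (s e), Ex e]) (fa_zero :: ('v,'e,'k) fa)"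
    using cong_zero_context[OF cong_vertex_orth[of a "s e"], of "[]" "[Ex e]"] assms by simp
  show ?thesis using cong_trans[OF 1 2] .
qed

lemma cong_vertex_ghost_zero: assumes "a \<in> V" "e \<in> E1" "a \<noteq> r e"
  shows "cong (mono [Vx a, Gx e]) (fa_zero :: ('v,'e,'k::field) fa)"
proof -
  have 1: "cong (mono [Vx a, Gx e]) (mono [Vx a, Vx (r e), Gx e] :: ('v,'e,'k) fa)"
    using cong_mono_context[OF cong_sym[OF cong_range_ghost[OF assms(2)]], of "[Vx a]" "[]"] assms by simp
  have 2: "cong (mono [Vx a, Vx (r e), Gx e]) (fa_zero :: ('v,'e,'k) fa)"
    using cong_zero_context[OF cong_vertex_orth[of a "r e"], of "[]" "[Gx e]"] assms by simp
  show ?thesis using cong_trans[OF 1 2] .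
qed

lemma cong_edge_vertex_zero: assumes "a \<in> V" "e \<in> E1" "r e \<noteq> a"
  shows "cong (mono [Ex e, Vx a]) (fa_zero :: ('v,'e,'k::field) fa)"
proof -
  have 1: "cong (mono [Ex e, Vx a]) (mono [Ex e, Vx (r e), Vx a] :: ('v,'e,'k) fa)"
    using cong_mono_context[OF cong_sym[OF cong_edge_range[OF assms(2)]], of "[]" "[Vx a]"] assms by simp
  have 2: "cong (mono [Ex e, Vx (r e), Vx a]) (fa_zero :: ('v,'e,'k) fa)"
    using cong_zero_context[OF cong_vertex_orth[of "r e" a], of "[Ex e]" "[]"] assms by simp
  show ?thesis using cong_trans[OF 1 2] .
qed

lemma cong_ghost_vertex_zero: assumes "a \<in> V" "e \<in> E1" "s e \<noteq> a"
  shows "cong (mono [Gx e, Vx a]) (fa_zero :: ('v,'e,'k::field) fa)"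
proof -
  have 1: "cong (mono [Gx e, Vx a]) (mono [Gx e, Vx (s e), Vx a] :: ('v,'e,'k) fa)"
    using cong_mono_context[OF cong_sym[OF cong_ghost_source[OF assms(2)]], of "[]" "[Vx a]"] assms by simp
  have 2: "cong (mono [Gx e, Vx (s e), Vx a]) (fa_zero :: ('v,'e,'k) fa)"
    using cong_zero_context[OF cong_vertex_orth[of "s e" a], of "[Gx e]" "[]"] assms by simp
  show ?thesis using cong_trans[OF 1 2] .
qed

lemma cong_edge_edge_zero: assumes "e \<in> E1" "f \<in> E1" "r e \<noteq> s f"
  shows "cong (mono [Ex e, Ex f]) (fa_zero :: ('v,'e,'k::field) fa)"
proof -
  have 1: "cong (mono [Ex e, Ex f]) (mono [Ex e, Vx (s f), Ex f] :: ('v,'e,'k) fa)"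
    using cong_mono_context[OF cong_sym[OF cong_source_edge[OF assms(2)]], of "[Ex e]" "[]"] assms by simp
  have 2: "cong (mono [Ex e, Vx (s f), Ex f]) (fa_zero :: ('v,'e,'k) fa)"
    using cong_zero_context[OF cong_edge_vertex_zero[of "s f" e], of "[]" "[Ex f]"] assms by simp
  show ?thesis using cong_trans[OF 1 2] .
qed

lemma cong_edge_ghost_zero: assumes "e \<in> E1" "f \<in> E1" "r e \<noteq> r f"
  shows "cong (mono [Ex e, Gx f]) (fa_zero :: ('v,'e,'k::field) fa)"
proof -
  have 1: "cong (mono [Ex e, Gx f]) (mono [Ex e, Vx (r f), Gx f] :: ('v,'e,'k) fa)"
    using cong_mono_context[OF cong_sym[OF cong_range_ghost[OF assms(2)]], of "[Ex e]" "[]"] assms by simp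
  have 2: "cong (mono [Ex e, Vx (r f), Gx f]) (fa_zero :: ('v,'e,'k) fa)"
    using cong_zero_context[OF cong_edge_vertex_zero[of "r f" e], of "[]" "[Gx f]"] assms by simp
  show ?thesis using cong_trans[OF 1 2] .
qed

lemma cong_ghost_ghost_zero: assumes "e \<in> E1" "f \<in> E1" "s e \<noteq> r f"
  shows "cong (mono [Gx e, Gx f]) (fa_zero :: ('v,'e,'k::field) fa)"
proof -
  have 1: "cong (mono [Gx e, Gx f]) (mono [Gx e, Vx (r f), Gx f] :: ('v,'e,'k) fa)"
    using cong_mono_context[OF cong_sym[OF cong_range_ghost[OF assms(2)]], of "[Gx e]" "[]"] assms by simp
  have 2: "cong (mono [Gx e, Vx (r f), Gx f]) (fa_zero :: ('v,'e,'k) fa)"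
    using cong_zero_context[OF cong_ghost_vertex_zero[of "r f" e], of "[]" "[Gx f]"] assms by simp
  show ?thesis using cong_trans[OF 1 2] .
qed

end

section \<open>Normal words span\<close>

text \<open>The normal word of (\<mu>, \<nu>, j) is the monomial \<mu> \<nu>^*, read as the vertex j
  when both paths are empty.\<close>
definition normal_word :: "'e list \<times> 'e list \<times> 'v \<Rightarrow> ('v, 'e) gen list" where
  "normal_word t = (case t of (\<mu>, \<nu>, j) \<Rightarrow>
     if \<mu> = [] \<and> \<nu> = [] then [Vx j] else map Ex \<mu> @ map Gx (rev \<nu>))"

lemma normal_word_simps [simp]:
  "normal_word ([], [], j) = [Vx j]"
  "normal_word (e # \<mu>, \<nu>, j) = Ex e # map Ex \<mu> @ map Gx (rev \<nu>)"
  "normal_word (\<mu>, \<nu> @ [f], j) = map Ex \<mu> @ Gx f # map Gx (rev \<nu>)"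
  unfolding normal_word_def by auto

lemma normal_word_not_Nil [simp]: "normal_word t \<noteq> []"
  unfolding normal_word_def by (auto split: prod.splits)

context lpa_graph
begin

fun path_to :: "'e list \<Rightarrow> 'v \<Rightarrow> bool" where
  "path_to [] j = True"
| "path_to (e # es) j = (e \<in> E1 \<and> r e = (case es of [] \<Rightarrow> j | f # _ \<Rightarrow> s f) \<and> path_to es j)"

lemma path_to_snoc: "path_to (es @ [e]) j \<longleftrightarrow> path_to es (s e) \<and> e \<in> E1 \<and> r e = j"
  by (induction es) (auto split: list.splits simp: Cons_eq_append_conv)

lemma path_to_edges: "path_to es j \<Longrightarrow> set es \<subseteq> E1"
  by (induction es) auto

lemma path_to_last: "path_to es j \<Longrightarrow> es \<noteq> [] \<Longrightarrow> r (last es) = j"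
  by (induction es) (auto split: list.splits)

definition normal_triples :: "('e list \<times> 'e list \<times> 'v) set" where
  "normal_triples = {(\<mu>, \<nu>, j). path_to \<mu> j \<and> path_to \<nu> j \<and> j \<in> V}"

lemma normal_triples_iff: "(\<mu>, \<nu>, j) \<in> normal_triples \<longleftrightarrow> path_to \<mu> j \<and> path_to \<nu> j \<and> j \<in> V"
  unfolding normal_triples_def by simp

lemma normal_word_gens: "t \<in> normal_triples \<Longrightarrow> set (normal_word t) \<subseteq> gens V E1"
  unfolding normal_triples_def normal_word_def by (auto dest!: path_to_edges)

definition cong_normal :: "('v,'e,'k::field) fa \<Rightarrow> bool" where
  "cong_normal p \<longleftrightarrow> cong p fa_zero \<or> (\<exists>t\<in>normal_triples. cong p (mono (normal_word t)))"

lemma cong_normal_zero: "cong p fa_zero \<Longrightarrow> cong_normal p"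
  unfolding cong_normal_def by simp

lemma cong_normal_normal_word: "t \<in> normal_triples \<Longrightarrow> cong p (mono (normal_word t)) \<Longrightarrow> cong_normal p"
  unfolding cong_normal_def by blast

lemma cong_normal_normal_word_refl:
  "t \<in> normal_triples \<Longrightarrow> cong_normal (mono (normal_word t) :: ('v,'e,'k::field) fa)"
  using cong_normal_normal_word cong_refl by blast

lemma cong_normal_trans: "cong p q \<Longrightarrow> cong_normal q \<Longrightarrow> cong_normal p"
  unfolding cong_normal_def using cong_trans by blast

lemma normal_triple_cases:
  fixes \<mu> \<nu> :: "'e list"
  obtains (edge) f \<mu>' where "\<mu> = f # \<mu>'" | (vertex) "\<mu> = []" "\<nu> = []"
    | (ghost) \<nu>' f where "\<mu> = []" "\<nu> = \<nu>' @ [f]"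
  by (cases \<mu>; cases \<nu> rule: rev_cases) auto

lemma cong_normal_Cons_vertex:
  assumes t: "(\<mu>, \<nu>, j) \<in> normal_triples" and a: "a \<in> V"
  shows "cong_normal (mono (Vx a # normal_word (\<mu>, \<nu>, j)) :: ('v,'e,'k::field) fa)"
proof -
  have ep: "path_to \<mu> j" "path_to \<nu> j" "j \<in> V" using t by (auto simp: normal_triples_iff)
  show ?thesis
  proof (cases rule: normal_triple_cases[where \<mu> = \<mu> and \<nu> = \<nu>])
    case (edge f \<mu>')
    let ?R = "map Ex \<mu>' @ map Gx (rev \<nu>)"
    have f: "f \<in> E1" and R: "set ?R \<subseteq> gens V E1"
      using ep edge by (auto dest!: path_to_edges)
    show ?thesis
    proof (cases "a = s f")
      case True
      then show ?thesis using cong_mono_context[OF cong_source_edge[OF f], of "[]" ?R] edge R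
        by (intro cong_normal_normal_word[OF t]) simp
    next
      case False
      then show ?thesis using cong_zero_context[OF cong_vertex_edge_zero[OF a f False], of "[]" ?R] edge R
        by (intro cong_normal_zero) simp
    qed
  next
    case vertex
    show ?thesis
    proof (cases "a = j")
      case True
      then show ?thesis using cong_vertex_idem[OF a] vertex by (intro cong_normal_normal_word[OF t]) simp
    next
      case False
      then show ?thesis using cong_vertex_orth[OF a ep(3) False] vertex by (intro cong_normal_zero) simp
    qed
  next
    case (ghost \<nu>' f)
    let ?R = "map Gx (rev \<nu>')"
    have f: "f \<in> E1" and R: "set ?R \<subseteq> gens V E1"
      using ep ghost by (auto simp: path_to_snoc dest!: path_to_edges)
    show ?thesis
    proof (cases "a = r f")
      case True
      then show ?thesis using cong_mono_context[OF cong_range_ghost[OF f], of "[]" ?R] ghost R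
        by (intro cong_normal_normal_word[OF t]) simp
    next
      case False
      then show ?thesis using cong_zero_context[OF cong_vertex_ghost_zero[OF a f False], of "[]" ?R] ghost R
        by (intro cong_normal_zero) simp
    qed
  qed
qed

lemma cong_normal_Cons_edge:
  assumes t: "(\<mu>, \<nu>, j) \<in> normal_triples" and e: "e \<in> E1"
  shows "cong_normal (mono (Ex e # normal_word (\<mu>, \<nu>, j)) :: ('v,'e,'k::field) fa)"
proof -
  have ep: "path_to \<mu> j" "path_to \<nu> j" "j \<in> V" using t by (auto simp: normal_triples_iff)
  show ?thesis
  proof (cases rule: normal_triple_cases[where \<mu> = \<mu> and \<nu> = \<nu>])
    case (edge f \<mu>')
    let ?R = "map Ex \<mu>' @ map Gx (rev \<nu>)"
    have f: "f \<in> E1" and R: "set ?R \<subseteq> gens V E1"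
      using ep edge by (auto dest!: path_to_edges)
    show ?thesis
    proof (cases "r e = s f")
      case True
      then have "(e # \<mu>, \<nu>, j) \<in> normal_triples" using ep edge e by (auto simp: normal_triples_iff)
      from cong_normal_normal_word_refl[OF this] show ?thesis using edge by simp
    next
      case False
      then show ?thesis using cong_zero_context[OF cong_edge_edge_zero[OF e f False], of "[]" ?R] edge R
        by (intro cong_normal_zero) simp
    qed
  next
    case vertex
    show ?thesis
    proof (cases "r e = j")
      case True
      then have "([e], [], j) \<in> normal_triples" using e ep by (auto simp: normal_triples_iff)
      then show ?thesis using cong_edge_range[OF e] True vertex
        by (intro cong_normal_normal_word) auto
    next
      case False
      then show ?thesis using cong_edge_vertex_zero[OF ep(3) e False] vertex
        by (intro cong_normal_zero) simp
    qed
  next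
    case (ghost \<nu>' f)
    let ?R = "map Gx (rev \<nu>')"
    have f: "f \<in> E1" "r f = j" and R: "set ?R \<subseteq> gens V E1"
      using ep ghost by (auto simp: path_to_snoc dest!: path_to_edges)
    show ?thesis
    proof (cases "r e = r f")
      case True
      then have "([e], \<nu>, j) \<in> normal_triples" using ep e f by (auto simp: normal_triples_iff)
      from cong_normal_normal_word_refl[OF this] show ?thesis using ghost by simp
    next
      case False
      then show ?thesis using cong_zero_context[OF cong_edge_ghost_zero[OF e f(1) False], of "[]" ?R] ghost R
        by (intro cong_normal_zero) simp
    qed
  qed
qed

lemma cong_normal_Cons_range:
  assumes t: "(f # \<mu>, \<nu>, j) \<in> normal_triples"
  shows "cong_normal (mono (Vx (r f) # map Ex \<mu> @ map Gx (rev \<nu>)) :: ('v,'e,'k::field) fa)"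
proof -
  have t': "(\<mu>, \<nu>, j) \<in> normal_triples" and f: "f \<in> E1" using t by (auto simp: normal_triples_iff)
  show ?thesis
  proof (cases "\<mu> = [] \<and> \<nu> = []")
    case True
    then have "r f = j" using t by (simp add: normal_triples_iff)
    then show ?thesis using cong_normal_normal_word_refl[OF t'] True by simp
  next
    case False
    then have "map Ex \<mu> @ map Gx (rev \<nu>) = normal_word (\<mu>, \<nu>, j)" by (simp add: normal_word_def)
    then show ?thesis using cong_normal_Cons_vertex[OF t' r_in_V[OF f]] by simp
  qed
qed

lemma cong_normal_Cons_ghost:
  assumes t: "(\<mu>, \<nu>, j) \<in> normal_triples" and e: "e \<in> E1"
  shows "cong_normal (mono (Gx e # normal_word (\<mu>, \<nu>, j)) :: ('v,'e,'k::field) fa)"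
proof -
  have ep: "path_to \<mu> j" "path_to \<nu> j" "j \<in> V" using t by (auto simp: normal_triples_iff)
  show ?thesis
  proof (cases rule: normal_triple_cases[where \<mu> = \<mu> and \<nu> = \<nu>])
    case (edge f \<mu>')
    let ?R = "map Ex \<mu>' @ map Gx (rev \<nu>)"
    have f: "f \<in> E1" and R: "set ?R \<subseteq> gens V E1"
      using ep edge by (auto dest!: path_to_edges)
    show ?thesis
    proof (cases "e = f")
      case True
      have "cong (mono (Gx e # normal_word (\<mu>, \<nu>, j))) (mono (Vx (r f) # ?R) :: ('v,'e,'k) fa)"
        using cong_mono_context[OF cong_ghost_edge[OF e], of "[]" ?R] edge True R by simp
      then show ?thesis using cong_normal_Cons_range[OF t[unfolded edge]] cong_normal_trans by blast
    next
      case False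
      then show ?thesis using cong_zero_context[OF cong_ghost_edge_orth[OF e f False], of "[]" ?R] edge R
        by (intro cong_normal_zero) simp
    qed
  next
    case vertex
    show ?thesis
    proof (cases "s e = j")
      case True
      then have "([], [e], r e) \<in> normal_triples" using e ep by (auto simp: normal_triples_iff)
      then show ?thesis using cong_ghost_source[OF e] True vertex
        by (intro cong_normal_normal_word) (auto simp: normal_word_def)
    next
      case False
      then show ?thesis using cong_ghost_vertex_zero[OF ep(3) e False] vertex
        by (intro cong_normal_zero) simp
    qed
  next
    case (ghost \<nu>' f)
    let ?R = "map Gx (rev \<nu>')"
    have f: "f \<in> E1" "r f = j" and R: "set ?R \<subseteq> gens V E1"
      using ep ghost by (auto simp: path_to_snoc dest!: path_to_edges)
    show ?thesis
    proof (cases "s e = r f")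
      case True
      then have "([], \<nu> @ [e], r e) \<in> normal_triples" using ep e f by (auto simp: normal_triples_iff path_to_snoc)
      moreover have "Gx e # normal_word (\<mu>, \<nu>, j) = normal_word ([], \<nu> @ [e], r e)"
        using ghost by (simp only: normal_word_simps(3)) simp
      ultimately show ?thesis by (metis cong_normal_normal_word_refl)
    next
      case False
      then show ?thesis using cong_zero_context[OF cong_ghost_ghost_zero[OF e f(1) False], of "[]" ?R] ghost R
        by (intro cong_normal_zero) simp
    qed
  qed
qed

lemma cong_normal_word:
  "w \<noteq> [] \<Longrightarrow> set w \<subseteq> gens V E1 \<Longrightarrow> cong_normal (mono w :: ('v,'e,'k::field) fa)"
proof (induction w)
  case (Cons g w)
  then have g: "g \<in> gens V E1" and w: "set w \<subseteq> gens V E1" by auto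
  show ?case
  proof (cases "w = []")
    case True
    obtain t where "t \<in> normal_triples" "[g] = normal_word t"
    proof (cases g)
      case (Vx a)
      then show ?thesis using g that[of "([], [], a)"] by (simp add: normal_triples_iff)
    next
      case (Ex e)
      then show ?thesis using g that[of "([e], [], r e)"] by (simp add: normal_triples_iff)
    next
      case (Gx e)
      then show ?thesis using g that[of "([], [e], r e)"] by (simp add: normal_triples_iff normal_word_def)
    qed
    then show ?thesis using True cong_normal_normal_word_refl by metis
  next
    case False
    then have "cong_normal (mono w :: ('v,'e,'k) fa)" using Cons.IH w by simp
    then consider "cong (mono w) (fa_zero :: ('v,'e,'k) fa)"
      | t where "t \<in> normal_triples" "cong (mono w) (mono (normal_word t) :: ('v,'e,'k) fa)"
      unfolding cong_normal_def by blast
    then show ?thesis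
    proof cases
      case 1
      then show ?thesis using cong_zero_context[OF 1, of "[g]" "[]"] g by (simp add: cong_normal_zero)
    next
      case 2
      obtain \<mu> \<nu> j where t: "t = (\<mu>, \<nu>, j)" by (cases t)
      have "cong_normal (mono (g # normal_word t) :: ('v,'e,'k) fa)"
        using g 2(1) unfolding t gens_def
        by (auto intro: cong_normal_Cons_vertex cong_normal_Cons_edge cong_normal_Cons_ghost)
      then show ?thesis
        using cong_mono_context[OF 2(2), of "[g]" "[]"] g cong_normal_trans by simp
    qed
  qed
qed simp

definition normally_supported :: "('v,'e,'k::field) fa \<Rightarrow> bool" where
  "normally_supported q \<longleftrightarrow> (\<forall>w. q w \<noteq> 0 \<longrightarrow> (\<exists>t\<in>normal_triples. w = normal_word t))"

lemma normally_supported_lincomb: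
  assumes "\<And>i. i \<in> F \<Longrightarrow> normally_supported (f i)"
  shows "normally_supported (\<lambda>w. \<Sum>i\<in>F. c i * f i w)"
  unfolding normally_supported_def
proof (intro allI impI)
  fix w assume "(\<Sum>i\<in>F. c i * f i w) \<noteq> 0"
  then obtain i where "i \<in> F" "c i * f i w \<noteq> 0" by (meson sum.not_neutral_contains_not_neutral)
  then have "normally_supported (f i)" "f i w \<noteq> 0" using assms by auto
  then show "\<exists>t\<in>normal_triples. w = normal_word t" unfolding normally_supported_def by blast
qed

lemma cong_normal_normally_supported:
  assumes "cong_normal p"
  shows "\<exists>q. q \<in> fa_elems V E1 \<and> normally_supported q \<and> cong p q"
  using assms unfolding cong_normal_def
proof (elim disjE bexE)
  assume "cong p fa_zero"
  then show ?thesis using fa_elems_zero by (auto simp: normally_supported_def fa_zero_def)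
next
  fix t assume t: "t \<in> normal_triples" "cong p (mono (normal_word t))"
  have "mono (normal_word t) \<in> fa_elems V E1" using t by (intro fa_elems_mono normal_word_gens) auto
  moreover have "normally_supported (mono (normal_word t))"
    using t by (auto simp: normally_supported_def mono_def)
  ultimately show ?thesis using t by blast
qed

lemma cong_normally_supported:
  assumes p: "p \<in> fa_elems V E1"
  shows "\<exists>q. q \<in> fa_elems V E1 \<and> normally_supported q \<and> cong p (q :: ('v,'e,'k::field) fa)"
proof -
  define S where "S = {w. p w \<noteq> 0}"
  have S: "finite S" "\<And>w. w \<in> S \<Longrightarrow> w \<noteq> [] \<and> set w \<subseteq> gens V E1"
    using fa_elemsD[OF p] unfolding S_def by auto
  have "\<forall>w\<in>S. \<exists>q. q \<in> fa_elems V E1 \<and> normally_supported q \<and> cong (mono w) (q :: ('v,'e,'k) fa)"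
  proof
    fix w assume "w \<in> S"
    then have "cong_normal (mono w :: ('v,'e,'k) fa)" using S(2) by (intro cong_normal_word) auto
    then show "\<exists>q. q \<in> fa_elems V E1 \<and> normally_supported q \<and> cong (mono w) (q :: ('v,'e,'k) fa)"
      by (rule cong_normal_normally_supported)
  qed
  from bchoice[OF this] obtain g where g: "\<forall>w\<in>S.
      g w \<in> fa_elems V E1 \<and> normally_supported (g w) \<and> cong (mono w) (g w :: ('v,'e,'k) fa)"
    by auto
  define q where "q = (\<lambda>x. \<Sum>w\<in>S. p w * g w x)"
  have "cong (\<lambda>x. \<Sum>w\<in>S. p w * mono w x) q"
    unfolding q_def using S(1) g by (intro cong_lincomb) auto
  moreover have "(\<lambda>x. \<Sum>w\<in>S. p w * mono w x) = p"
    unfolding S_def by (rule fa_expansion[OF fa_elemsD(1)[OF p], symmetric])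
  ultimately have "cong p q" by simp
  moreover have "q \<in> fa_elems V E1" unfolding q_def using S(1) g by (intro fa_elems_lincomb) auto
  moreover have "normally_supported q" unfolding q_def using g by (intro normally_supported_lincomb) auto
  ultimately show ?thesis by blast
qed

end

section \<open>The representation on boundary paths\<close>

text \<open>A boundary path is either a finite path ending at a sink or infinite emitter v
  (stored as v and its edge list) or an infinite path.\<close>
datatype ('v, 'e) bpath = BFin 'v "'e list" | BInf "nat \<Rightarrow> 'e"

fun bcons :: "'e \<Rightarrow> ('v, 'e) bpath \<Rightarrow> ('v, 'e) bpath" where
  "bcons e (BFin v es) = BFin v (e # es)"
| "bcons e (BInf f) = BInf (case_nat e f)"

lemma bcons_inj [simp]: "bcons e b = bcons e' b' \<longleftrightarrow> e = e' \<and> b = b'"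
proof
  assume h: "bcons e b = bcons e' b'"
  show "e = e' \<and> b = b'"
  proof (cases b; cases b')
    fix f g assume "b = BInf f" "b' = BInf g"
    then have "case_nat e f = case_nat e' g" using h by simp
    then have "e = e'" "\<And>n. f n = g n" by (metis old.nat.simps(4), metis old.nat.simps(5))
    then show ?thesis using \<open>b = BInf f\<close> \<open>b' = BInf g\<close> by auto
  qed (use h in auto)
qed auto

fun bprefix :: "'e list \<Rightarrow> ('v, 'e) bpath \<Rightarrow> ('v, 'e) bpath" where
  "bprefix [] b = b"
| "bprefix (e # es) b = bcons e (bprefix es b)"

lemma bprefix_eq_bprefixD:
  "bprefix \<nu> q = bprefix \<nu>' z \<Longrightarrow> length \<nu> \<le> length \<nu>' \<Longrightarrow> \<exists>\<delta>. \<nu>' = \<nu> @ \<delta> \<and> q = bprefix \<delta> z"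
proof (induction \<nu> arbitrary: \<nu>')
  case Nil
  then show ?case by simp
next
  case (Cons e \<nu>)
  then obtain e' \<nu>'' where "\<nu>' = e' # \<nu>''" by (cases \<nu>') auto
  with Cons show ?case by auto
qed

lemma bprefix_eq_BFin_Nil: "bprefix \<delta> z = BFin j [] \<Longrightarrow> \<delta> = []"
  by (cases \<delta>; cases "bprefix (tl \<delta>) z") auto

lemma bprefix_inj: "bprefix \<mu>' q = bprefix \<mu> q \<Longrightarrow> length \<mu>' = length \<mu> \<Longrightarrow> \<mu>' = \<mu>"
  using bprefix_eq_bprefixD[of \<mu>' q \<mu> q] by auto

context lpa_graph
begin

fun src :: "('v, 'e) bpath \<Rightarrow> 'v" where
  "src (BFin v []) = v"
| "src (BFin v (e # es)) = s e"
| "src (BInf f) = s (f 0)"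

lemma src_bcons [simp]: "src (bcons e b) = s e"
  by (cases b) auto

fun boundary :: "('v, 'e) bpath \<Rightarrow> bool" where
  "boundary (BFin v es) = (v \<in> V \<and> \<not> regular E1 s v \<and> path_to es v)"
| "boundary (BInf f) = (\<forall>i. f i \<in> E1 \<and> r (f i) = s (f (Suc i)))"

fun uncons :: "'e \<Rightarrow> ('v, 'e) bpath \<Rightarrow> ('v, 'e) bpath option" where
  "uncons e (BFin v []) = None"
| "uncons e (BFin v (f # es)) = (if f = e \<and> r e = src (BFin v es) then Some (BFin v es) else None)"
| "uncons e (BInf f) = (if f 0 = e \<and> r e = s (f 1) then Some (BInf (\<lambda>n. f (Suc n))) else None)"

lemma uncons_iff: "uncons e c = Some b \<longleftrightarrow> c = bcons e b \<and> r e = src b"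
proof (cases c)
  case (BFin v es)
  then show ?thesis by (cases es; cases b) auto
next
  case (BInf g)
  show ?thesis
  proof
    assume "uncons e c = Some b"
    then have "g 0 = e" "r e = s (g 1)" "b = BInf (\<lambda>n. g (Suc n))" using BInf by (auto split: if_splits)
    moreover have "case_nat (g 0) (\<lambda>n. g (Suc n)) = g" by (rule ext) (simp split: nat.splits)
    ultimately show "c = bcons e b \<and> r e = src b" using BInf by auto
  next
    assume "c = bcons e b \<and> r e = src b"
    then show "uncons e c = Some b" using BInf by (cases b) auto
  qed
qed

lemma uncons_bcons [simp]: "r e = src b \<Longrightarrow> uncons e (bcons e b) = Some b"
  by (simp add: uncons_iff)

text \<open>States carry an integer recording the net number of edges prepended; without it a
  cycle without exits would act as the identity on the infinite path winding around it.\<close>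
fun act_gen :: "('v, 'e) gen \<Rightarrow> ('v, 'e) bpath \<times> int \<Rightarrow> (('v, 'e) bpath \<times> int) option" where
  "act_gen (Vx a) (b, n) = (if a \<in> V \<and> src b = a then Some (b, n) else None)"
| "act_gen (Ex e) (b, n) = (if e \<in> E1 \<and> r e = src b then Some (bcons e b, n + 1) else None)"
| "act_gen (Gx e) (b, n) = (if e \<in> E1 then (case uncons e b of None \<Rightarrow> None | Some b' \<Rightarrow> Some (b', n - 1)) else None)"

lemma act_gen_star: "act_gen (gstar g) y = Some x \<longleftrightarrow> act_gen g x = Some y"
proof (cases g)
  case (Vx a)
  then show ?thesis by (cases x; cases y) auto
next
  case (Ex e)
  obtain b n c m where xy: "x = (b, n)" "y = (c, m)" by (cases x; cases y) auto
  show ?thesis using Ex xy by (auto simp: uncons_iff split: option.splits)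
next
  case (Gx e)
  obtain b n c m where xy: "x = (b, n)" "y = (c, m)" by (cases x; cases y) auto
  show ?thesis using Gx xy by (auto simp: uncons_iff split: option.splits)
qed

fun act_word :: "('v, 'e) gen list \<Rightarrow> ('v, 'e) bpath \<times> int \<Rightarrow> (('v, 'e) bpath \<times> int) option" where
  "act_word [] x = Some x"
| "act_word (g # w) x = Option.bind (act_word w x) (act_gen g)"

lemma act_word_append: "act_word (u @ v) x = Option.bind (act_word v x) (act_word u)"
  by (induction u) (auto simp: bind_assoc)

lemma act_word_star: "act_word (map gstar (rev w)) y = Some x \<longleftrightarrow> act_word w x = Some y"
proof (induction w arbitrary: x y)
  case Nil
  then show ?case by auto
next
  case (Cons g w)
  have "act_word (map gstar (rev (g # w))) y = Option.bind (act_gen (gstar g) y) (act_word (map gstar (rev w)))"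
    by (simp add: act_word_append)
  then show ?case using Cons act_gen_star by (auto simp: bind_eq_Some_conv)
qed

definition boundary_state :: "('v, 'e) bpath \<times> int \<Rightarrow> bool" where
  "boundary_state x \<longleftrightarrow> boundary (fst x)"

lemma boundary_BInf_Cons:
  "boundary (BInf (case_nat e f)) \<longleftrightarrow> e \<in> E1 \<and> r e = s (f 0) \<and> boundary (BInf f)"
proof
  assume h: "boundary (BInf (case_nat e f))"
  have "f i \<in> E1 \<and> r (f i) = s (f (Suc i))" for i using h[simplified, rule_format, of "Suc i"] by simp
  then show "e \<in> E1 \<and> r e = s (f 0) \<and> boundary (BInf f)" using h[simplified, rule_format, of 0] by simp
next
  assume "e \<in> E1 \<and> r e = s (f 0) \<and> boundary (BInf f)"
  then show "boundary (BInf (case_nat e f))" by (simp split: nat.split)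
qed

lemma boundary_bcons_iff:
  assumes "r e = src b"
  shows "boundary (bcons e b) \<longleftrightarrow> e \<in> E1 \<and> boundary b"
proof (cases b)
  case (BFin v es)
  then show ?thesis using assms by (cases es) auto
next
  case (BInf f)
  then show ?thesis using assms by (simp only: bcons.simps boundary_BInf_Cons) simp
qed

lemma act_gen_boundary: "boundary_state x \<Longrightarrow> act_gen g x = Some y \<Longrightarrow> boundary_state y"
proof -
  assume v: "boundary_state x" and a: "act_gen g x = Some y"
  obtain b n where x: "x = (b, n)" by (cases x) auto
  show ?thesis
  proof (cases g)
    case (Vx a')
    then show ?thesis using v a x by (auto split: if_splits)
  next
    case (Ex e)
    then have y: "y = (bcons e b, n + 1)" "e \<in> E1" "r e = src b" using a x by (auto split: if_splits)
    then show ?thesis using v x boundary_bcons_iff unfolding boundary_state_def by simp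
  next
    case (Gx e)
    then obtain b' where y: "y = (b', n - 1)" "uncons e b = Some b'" using a x
      by (auto split: if_splits option.splits)
    then have "b = bcons e b'" "r e = src b'" by (auto simp: uncons_iff)
    then show ?thesis using v x y boundary_bcons_iff unfolding boundary_state_def by simp
  qed
qed

lemma act_word_boundary: "boundary_state x \<Longrightarrow> act_word w x = Some y \<Longrightarrow> boundary_state y"
proof (induction w arbitrary: y)
  case (Cons g w)
  then obtain z where "act_word w x = Some z" "act_gen g z = Some y" by (auto simp: bind_eq_Some_conv)
  then show ?case using Cons.IH Cons.prems(1) act_gen_boundary by blast
qed auto


end

section \<open>Matrix coefficients of the representation\<close>

context lpa_graph
begin

definition rep :: "('v,'e,'k::field) fa \<Rightarrow> ('v,'e) bpath \<times> int \<Rightarrow> ('v,'e) bpath \<times> int \<Rightarrow> 'k" where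
  "rep p x y = (\<Sum>w\<in>{w. p w \<noteq> 0}. p w * of_bool (act_word w x = Some y))"

definition targets :: "('v,'e,'k::field) fa \<Rightarrow> ('v,'e) bpath \<times> int \<Rightarrow> (('v,'e) bpath \<times> int) set" where
  "targets p x = {d. \<exists>w. p w \<noteq> 0 \<and> act_word w x = Some d}"

lemma finite_targets:
  assumes "finite {w. p w \<noteq> 0}"
  shows "finite (targets p x)"
proof (rule finite_subset)
  show "targets p x \<subseteq> (\<lambda>w. the (act_word w x)) ` {w. p w \<noteq> 0}"
  proof
    fix d assume "d \<in> targets p x"
    then obtain w where "p w \<noteq> 0" "act_word w x = Some d" unfolding targets_def by blast
    then show "d \<in> (\<lambda>w. the (act_word w x)) ` {w. p w \<noteq> 0}" by force
  qed
qed (use assms in simp)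

lemma targets_boundary: "boundary_state x \<Longrightarrow> d \<in> targets p x \<Longrightarrow> boundary_state d"
  unfolding targets_def using act_word_boundary by blast

lemma rep_nonzero_targets:
  assumes "rep p x y \<noteq> 0"
  shows "y \<in> targets p x"
proof -
  obtain w where "p w * of_bool (act_word w x = Some y) \<noteq> 0"
    using assms unfolding rep_def by (meson sum.not_neutral_contains_not_neutral)
  then show ?thesis unfolding targets_def by (auto split: if_splits)
qed

lemma rep_eq_sum_superset:
  assumes "finite W" "{w. p w \<noteq> 0} \<subseteq> W"
  shows "rep p x y = (\<Sum>w\<in>W. p w * of_bool (act_word w x = Some y))"
  unfolding rep_def by (rule sum.mono_neutral_left) (use assms in auto)

lemma rep_mono: "rep (mono w :: ('v,'e,'k::field) fa) x y = of_bool (act_word w x = Some y)"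
proof -
  have "rep (mono w :: ('v,'e,'k) fa) x y = (\<Sum>w'\<in>{w}. mono w w' * of_bool (act_word w' x = Some y))"
    by (rule rep_eq_sum_superset) (auto simp: mono_def split: if_splits)
  then show ?thesis by (simp add: mono_def)
qed

lemma rep_zero: "rep (fa_zero :: ('v,'e,'k::field) fa) x y = 0"
  unfolding rep_def fa_zero_def by simp

lemma rep_add:
  assumes "finite {w. p w \<noteq> 0}" "finite {w. q w \<noteq> 0}"
  shows "rep (fa_add p q :: ('v,'e,'k::field) fa) x y = rep p x y + rep q x y"
proof -
  let ?W = "{w. p w \<noteq> 0} \<union> {w. q w \<noteq> 0}"
  have "rep (fa_add p q) x y = (\<Sum>w\<in>?W. fa_add p q w * of_bool (act_word w x = Some y))"
    by (rule rep_eq_sum_superset) (use assms in \<open>auto simp: fa_add_def\<close>)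
  moreover have "rep p x y = (\<Sum>w\<in>?W. p w * of_bool (act_word w x = Some y))"
    by (rule rep_eq_sum_superset) (use assms in auto)
  moreover have "rep q x y = (\<Sum>w\<in>?W. q w * of_bool (act_word w x = Some y))"
    by (rule rep_eq_sum_superset) (use assms in auto)
  ultimately show ?thesis by (simp add: fa_add_def sum.distrib distrib_right)
qed

lemma rep_smult:
  assumes "finite {w. p w \<noteq> 0}"
  shows "rep (fa_smult c p :: ('v,'e,'k::field) fa) x y = c * rep p x y"
proof -
  have "rep (fa_smult c p) x y = (\<Sum>w\<in>{w. p w \<noteq> 0}. fa_smult c p w * of_bool (act_word w x = Some y))"
    by (rule rep_eq_sum_superset) (use assms in \<open>auto simp: fa_smult_def\<close>)
  then show ?thesis by (simp add: rep_def fa_smult_def sum_distrib_left mult_ac)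
qed

lemma rep_diff:
  assumes "finite {w. p w \<noteq> 0}" "finite {w. q w \<noteq> 0}"
  shows "rep (fa_diff p q :: ('v,'e,'k::field) fa) x y = rep p x y - rep q x y"
proof -
  have "fa_diff p q = fa_add p (fa_smult (-1) q)"
    by (auto simp: fa_diff_def fa_add_def fa_smult_def)
  moreover have "finite {w. fa_smult (-1) q w \<noteq> 0}" using assms(2) by (simp add: fa_smult_def)
  ultimately show ?thesis using assms by (simp add: rep_add rep_smult)
qed

lemma rep_sum:
  assumes "finite F" "\<And>i. i \<in> F \<Longrightarrow> finite {w. f i w \<noteq> 0}"
  shows "rep (\<lambda>w. \<Sum>i\<in>F. f i w :: 'k::field) x y = (\<Sum>i\<in>F. rep (f i) x y)"
proof -
  let ?W = "\<Union>i\<in>F. {w. f i w \<noteq> 0}"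
  have W: "finite ?W" using assms by auto
  have "rep (\<lambda>w. \<Sum>i\<in>F. f i w) x y = (\<Sum>w\<in>?W. (\<Sum>i\<in>F. f i w) * of_bool (act_word w x = Some y))"
    by (rule rep_eq_sum_superset[OF W]) (auto dest: sum.not_neutral_contains_not_neutral)
  also have "\<dots> = (\<Sum>i\<in>F. \<Sum>w\<in>?W. f i w * of_bool (act_word w x = Some y))"
    by (simp add: sum_distrib_right sum.swap[where A=F])
  also have "\<dots> = (\<Sum>i\<in>F. rep (f i) x y)"
    by (intro sum.cong refl rep_eq_sum_superset[symmetric] W) auto
  finally show ?thesis .
qed

lemma of_bool_act_word_append:
  assumes "finite D" "\<And>d. act_word v x = Some d \<Longrightarrow> d \<in> D"
  shows "(of_bool (act_word (u @ v) x = Some y) :: 'k::field) =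
    (\<Sum>d\<in>D. of_bool (act_word v x = Some d) * of_bool (act_word u d = Some y))"
proof (cases "act_word v x")
  case (Some d0)
  then have "(\<Sum>d\<in>D. of_bool (act_word v x = Some d) * of_bool (act_word u d = Some y)) =
      (\<Sum>d\<in>D. if d = d0 then of_bool (act_word u d0 = Some y) else (0::'k))"
    by (intro sum.cong refl) auto
  then show ?thesis using assms Some by (simp add: act_word_append sum.delta')
qed (simp add: act_word_append)

lemma rep_mult:
  fixes p q :: "('v,'e,'k::field) fa"
  assumes fp: "finite {w. p w \<noteq> 0}" and fq: "finite {w. q w \<noteq> 0}"
  shows "rep (fa_mult p q) x y = (\<Sum>d\<in>targets q x. rep q x d * rep p d y)"
proof -
  define Sp where "Sp = {w. p w \<noteq> 0}"
  define Sq where "Sq = {w. q w \<noteq> 0}"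
  define D where "D = targets q x"
  define cat where "cat = (\<lambda>(u::('v,'e) gen list, v::('v,'e) gen list). u @ v)"
  define W where "W = cat ` (Sp \<times> Sq)"
  have fin: "finite Sp" "finite Sq" "finite D" "finite W"
    using fp fq finite_targets[OF fq] unfolding Sp_def Sq_def D_def W_def by auto
  define ind where "ind w z z' = (of_bool (act_word w z = Some z') :: 'k)" for w z z'
  have m: "fa_mult p q w = (\<Sum>z\<in>{z \<in> Sp \<times> Sq. cat z = w}. (case z of (u, v) \<Rightarrow> p u * q v))" for w
    unfolding fa_mult_def
    by (rule sum.mono_neutral_cong_right) (auto simp: finite_append_splits Sp_def Sq_def cat_def)
  have "{w. fa_mult p q w \<noteq> 0} \<subseteq> W"
    using fa_mult_nonzeroD unfolding W_def Sp_def Sq_def cat_def by fastforce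
  then have "rep (fa_mult p q) x y = (\<Sum>w\<in>W. fa_mult p q w * ind w x y)"
    unfolding ind_def by (rule rep_eq_sum_superset[OF fin(4)])
  also have "\<dots> = (\<Sum>w\<in>W. \<Sum>z\<in>{z \<in> Sp \<times> Sq. cat z = w}. (case z of (u, v) \<Rightarrow> p u * q v) * ind (cat z) x y)"
    unfolding m by (simp add: sum_distrib_right)
  also have "\<dots> = (\<Sum>z\<in>Sp \<times> Sq. (case z of (u, v) \<Rightarrow> p u * q v) * ind (cat z) x y)"
    by (rule sum.group) (use fin in \<open>auto simp: W_def\<close>)
  also have "\<dots> = (\<Sum>u\<in>Sp. \<Sum>v\<in>Sq. p u * q v * ind (u @ v) x y)"
    by (simp add: sum.cartesian_product cat_def split_def)
  also have "\<dots> = (\<Sum>u\<in>Sp. \<Sum>v\<in>Sq. \<Sum>d\<in>D. p u * q v * (ind v x d * ind u d y))"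
  proof (intro sum.cong refl)
    fix u v assume "v \<in> Sq"
    then have "ind (u @ v) x y = (\<Sum>d\<in>D. ind v x d * ind u d y)"
      unfolding ind_def using fin(3) by (intro of_bool_act_word_append) (auto simp: D_def targets_def Sq_def)
    then show "p u * q v * ind (u @ v) x y = (\<Sum>d\<in>D. p u * q v * (ind v x d * ind u d y))"
      by (simp add: sum_distrib_left)
  qed
  also have "\<dots> = (\<Sum>d\<in>D. (\<Sum>v\<in>Sq. q v * ind v x d) * (\<Sum>u\<in>Sp. p u * ind u d y))"
    by (simp add: sum_distrib_left sum_distrib_right mult_ac sum.swap[where B=D] sum.swap[where A=Sp])
  also have "\<dots> = (\<Sum>d\<in>D. rep q x d * rep p d y)"
    unfolding rep_def ind_def Sp_def Sq_def by simp
  finally show ?thesis unfolding D_def .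
qed

section \<open>The Leavitt ideal acts trivially\<close>

lemma boundary_first_edge:
  assumes "boundary b" "regular E1 s (src b)"
  shows "\<exists>e b'. b = bcons e b' \<and> r e = src b' \<and> e \<in> E1"
proof (cases b)
  case (BFin v es)
  then obtain e es' where "es = e # es'" using assms by (cases es) auto
  then have "b = bcons e (BFin v es')" "r e = src (BFin v es')" "e \<in> E1"
    using assms BFin by (cases es', auto)+
  then show ?thesis by blast
next
  case (BInf f)
  have "case_nat (f 0) (\<lambda>n. f (Suc n)) = f" by (rule ext) (simp split: nat.splits)
  then have "b = bcons (f 0) (BInf (\<lambda>n. f (Suc n)))" using BInf by simp
  moreover have "r (f 0) = src (BInf (\<lambda>n. f (Suc n)))" "f 0 \<in> E1" using assms BInf by auto
  ultimately show ?thesis by blast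
qed

text \<open>This is where boundary paths are needed: one that leaves a regular vertex v
  does so along exactly one of the finitely many edges of the Cuntz-Krieger relation at v.\<close>
lemma card_strippable_out_edges:
  assumes "boundary b" "regular E1 s v"
  shows "card {e \<in> {e \<in> E1. s e = v}. uncons e b \<noteq> None} = of_bool (src b = v)"
proof (cases "src b = v")
  case True
  then obtain e0 b0 where e0: "b = bcons e0 b0" "r e0 = src b0" "e0 \<in> E1"
    using boundary_first_edge assms by blast
  have S: "{e \<in> {e \<in> E1. s e = v}. uncons e b \<noteq> None} = {e0}"
    using True e0 by (auto simp: uncons_iff)
  show ?thesis unfolding S using True by simp
next
  case False
  then have S: "{e \<in> {e \<in> E1. s e = v}. uncons e b \<noteq> None} = {}"
    by (auto simp: uncons_iff)
  show ?thesis unfolding S using False by simp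
qed

lemma rep_CK2_sum:
  assumes "regular E1 s v" "boundary b"
  shows "rep (\<lambda>w. \<Sum>e\<in>{e \<in> E1. s e = v}. mono [Ex e, Gx e] w :: 'k::field) (b, n) y =
    of_bool (src b = v \<and> (b, n) = y)"
proof -
  let ?F = "{e \<in> E1. s e = v}"
  have fF: "finite ?F" using assms(1) by (simp add: regular_def)
  have ck: "act_word [Ex e, Gx e] (b, n) = (if e \<in> E1 \<and> uncons e b \<noteq> None then Some (b, n) else None)" for e
    by (cases "uncons e b") (auto simp: uncons_iff)
  have "rep (\<lambda>w. \<Sum>e\<in>?F. mono [Ex e, Gx e] w :: 'k) (b, n) y
      = (\<Sum>e\<in>?F. of_bool (act_word [Ex e, Gx e] (b, n) = Some y))"
    by (simp only: rep_sum[OF fF finite_mono_supp] rep_mono)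
  also have "\<dots> = (\<Sum>e\<in>?F. of_bool (uncons e b \<noteq> None) * of_bool ((b, n) = y))"
    by (intro sum.cong refl) (simp only: ck, auto)
  also have "\<dots> = of_nat (card {e \<in> ?F. uncons e b \<noteq> None}) * of_bool ((b, n) = y)"
    using fF by (simp add: sum_distrib_right[symmetric] Int_def)
  finally show ?thesis using card_strippable_out_edges[OF assms(2,1)] by simp
qed

lemma rep_rels_zero:
  assumes x: "x \<in> lpa_rels V E1 s r" and z: "boundary_state z"
  shows "rep (x :: ('v,'e,'k::field) fa) z y = 0"
proof -
  obtain b n where zz: "z = (b, n)" by (cases z)
  have vb: "boundary b" using z zz by (simp add: boundary_state_def)
  have fz: "finite {w. (fa_zero :: ('v,'e,'k) fa) w \<noteq> 0}" by (simp add: fa_zero_def)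
  have diff: "rep (fa_diff (mono a) (mono a') :: ('v,'e,'k) fa) (b, n) y' =
      of_bool (act_word a (b, n) = Some y') - of_bool (act_word a' (b, n) = Some y')"
    and diff_zero: "rep (fa_diff (mono a) fa_zero :: ('v,'e,'k) fa) (b, n) y' = of_bool (act_word a (b, n) = Some y')"
    for a a' y' by (simp_all add: rep_diff finite_mono_supp fz rep_mono rep_zero)
  from x show ?thesis unfolding lpa_rels_def
  proof (elim UnE CollectE exE conjE)
    fix v w assume "x = fa_diff (mono [Vx v, Vx w]) (if v = w then mono [Vx v] else fa_zero)" "v \<in> V" "w \<in> V"
    then show ?thesis by (cases "v = w"; cases y) (auto simp: diff diff_zero zz)
  next
    fix e assume "x = fa_diff (mono [Vx (s e), Ex e]) (mono [Ex e])" "e \<in> E1"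
    then show ?thesis by (cases y) (auto simp: diff zz)
  next
    fix e assume "x = fa_diff (mono [Ex e, Vx (r e)]) (mono [Ex e])" "e \<in> E1"
    then show ?thesis by (cases y) (auto simp: diff zz)
  next
    fix e assume "x = fa_diff (mono [Vx (r e), Gx e]) (mono [Gx e])" "e \<in> E1"
    then show ?thesis by (cases y) (auto simp: diff zz uncons_iff split: option.splits)
  next
    fix e assume "x = fa_diff (mono [Gx e, Vx (s e)]) (mono [Gx e])" "e \<in> E1"
    then show ?thesis by (cases y) (auto simp: diff zz uncons_iff split: option.splits)
  next
    fix e f assume "x = fa_diff (mono [Gx e, Ex f]) (if e = f then mono [Vx (r e)] else fa_zero)" "e \<in> E1" "f \<in> E1"
    then show ?thesis
      by (cases "e = f"; cases y) (auto simp: diff diff_zero zz uncons_iff split: option.splits)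
  next
    fix v
    let ?ck = "\<lambda>w. \<Sum>e\<in>{e \<in> E1. s e = v}. mono [Ex e, Gx e] w :: 'k"
    assume x: "x = fa_diff (mono [Vx v]) ?ck" and v: "v \<in> V" "regular E1 s v"
    have fin: "finite {w. ?ck w \<noteq> 0}"
      using v by (intro finite_sum_supp finite_mono_supp) (simp add: regular_def)
    have "act_word [Vx v] (b, n) = Some y \<longleftrightarrow> src b = v \<and> (b, n) = y" using v by auto
    then show ?thesis
      unfolding x zz rep_diff[OF finite_mono_supp fin] rep_mono rep_CK2_sum[OF v(2) vb] by simp
  qed
qed

lemma rep_ideal_zero:
  assumes "p \<in> lpa_ideal V E1 s r" "boundary_state z"
  shows "rep (p :: ('v,'e,'k::field) fa) z y = 0"
  using assms
proof (induction p arbitrary: z y rule: lpa_ideal.induct)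
  case zero
  then show ?case by (simp add: rep_zero)
next
  case (rel x)
  then show ?case using rep_rels_zero by blast
next
  case (add x y')
  have "finite {w. x w \<noteq> 0}" "finite {w. y' w \<noteq> 0}"
    using lpa_ideal_elems[OF add.hyps(1)] lpa_ideal_elems[OF add.hyps(2)] by (auto dest: fa_elemsD(1))
  then show ?case using add.IH add.prems by (simp add: rep_add)
next
  case (smult x c)
  have "finite {w. x w \<noteq> 0}" using lpa_ideal_elems[OF smult.hyps(1)] by (auto dest: fa_elemsD(1))
  then show ?case using smult.IH smult.prems by (simp add: rep_smult)
next
  case (left x p)
  have "finite {w. x w \<noteq> 0}" using lpa_ideal_elems[OF left.hyps(1)] by (rule fa_elemsD)
  moreover have "finite {w. p w \<noteq> 0}" using left.hyps(2) by (rule fa_elemsD)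
  ultimately show ?case using left.IH[OF left.prems] by (simp add: rep_mult)
next
  case (right x p)
  have "finite {w. x w \<noteq> 0}" using lpa_ideal_elems[OF right.hyps(1)] by (rule fa_elemsD)
  moreover have "finite {w. p w \<noteq> 0}" using right.hyps(2) by (rule fa_elemsD)
  moreover have "rep x d y = 0" if "d \<in> targets p z" for d
    using right.IH targets_boundary[OF right.prems that] by blast
  ultimately show ?case by (simp add: rep_mult)
qed

end

section \<open>The involution\<close>

lemma involution_0: "field_involution cj \<Longrightarrow> cj 0 = 0"
proof -
  assume "field_involution cj"
  then have "cj (0 + 0) = cj 0 + cj 0" unfolding field_involution_def by blast
  then have "cj 0 + 0 = cj 0 + cj 0" by simp
  then show ?thesis by (metis add_left_cancel)
qed

lemma involution_1: "field_involution cj \<Longrightarrow> cj 1 = 1"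
proof -
  assume cj: "field_involution cj"
  then have "cj (1 * 1) = cj 1 * cj 1" "cj (cj 1) = 1" unfolding field_involution_def by blast+
  moreover have "cj 1 \<noteq> 0" using calculation(2) involution_0[OF cj] by auto
  ultimately show ?thesis by simp
qed

lemma involution_mult: "field_involution cj \<Longrightarrow> cj (a * b) = cj a * cj b"
  unfolding field_involution_def by blast

lemma involution_sum: "field_involution cj \<Longrightarrow> cj (\<Sum>i\<in>F. f i) = (\<Sum>i\<in>F. cj (f i))"
  by (induction F rule: infinite_finite_induct) (simp_all add: involution_0 field_involution_def)

lemma involution_eq_0_iff: "field_involution cj \<Longrightarrow> cj a = 0 \<longleftrightarrow> a = 0"
proof -
  assume cj: "field_involution cj"
  then have "cj (cj a) = a" unfolding field_involution_def by blast
  then show ?thesis using involution_0[OF cj] by metis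
qed

lemma gstar_gstar [simp]: "gstar (gstar g) = g"
  by (cases g) auto

lemma star_star [simp]: "map gstar (rev (map gstar (rev w))) = w"
  by (simp add: rev_map comp_def)

context lpa_graph
begin

lemma rep_star:
  fixes x :: "('v,'e,'k::field) fa"
  assumes fx: "finite {w. x w \<noteq> 0}" and cj: "field_involution cj"
  shows "rep (fa_star cj x) z y = cj (rep x y z)"
proof -
  let ?sg = "\<lambda>w. map gstar (rev w)"
  have inj: "inj_on ?sg {w. x w \<noteq> 0}" by (rule inj_onI) (metis star_star)
  have "{w. fa_star cj x w \<noteq> 0} \<subseteq> ?sg ` {w. x w \<noteq> 0}"
  proof
    fix w assume "w \<in> {w. fa_star cj x w \<noteq> 0}"
    then have "x (?sg w) \<noteq> 0" using involution_0[OF cj] unfolding fa_star_def by fastforce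
    then show "w \<in> ?sg ` {w. x w \<noteq> 0}" by (intro image_eqI[where x="?sg w"]) auto
  qed
  then have "rep (fa_star cj x) z y =
      (\<Sum>w\<in>?sg ` {w. x w \<noteq> 0}. fa_star cj x w * of_bool (act_word w z = Some y))"
    using fx by (intro rep_eq_sum_superset) auto
  also have "\<dots> = (\<Sum>u\<in>{w. x w \<noteq> 0}. fa_star cj x (?sg u) * of_bool (act_word (?sg u) z = Some y))"
    by (rule sum.reindex[OF inj, unfolded comp_def])
  also have "\<dots> = (\<Sum>u\<in>{w. x w \<noteq> 0}. cj (x u * of_bool (act_word u y = Some z)))"
    by (intro sum.cong refl)
      (simp add: fa_star_def act_word_star involution_mult[OF cj] involution_1[OF cj] involution_0[OF cj])
  also have "\<dots> = cj (rep x y z)" unfolding rep_def by (simp add: involution_sum[OF cj])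
  finally show ?thesis .
qed

lemma finite_star_supp:
  assumes "finite {w. x w \<noteq> 0}" "field_involution cj"
  shows "finite {w. fa_star cj x w \<noteq> 0}"
proof -
  have "{w. fa_star cj x w \<noteq> 0} \<subseteq> (\<lambda>w. map gstar (rev w)) ` {w. x w \<noteq> 0}"
  proof
    fix w assume "w \<in> {w. fa_star cj x w \<noteq> 0}"
    then have "x (map gstar (rev w)) \<noteq> 0" using involution_0[OF assms(2)] unfolding fa_star_def by fastforce
    then show "w \<in> (\<lambda>w. map gstar (rev w)) ` {w. x w \<noteq> 0}"
      by (intro image_eqI[where x="map gstar (rev w)"]) auto
  qed
  then show ?thesis using assms(1) finite_subset by blast
qed

text \<open>The diagonal coefficients of x x^* are sums of norms, which is what transfers
  positivity from the field to the algebra.\<close>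
lemma rep_mult_star_diag:
  fixes x :: "('v,'e,'k::field) fa"
  assumes fx: "finite {w. x w \<noteq> 0}" and cj: "field_involution cj"
  shows "rep (fa_mult x (fa_star cj x)) z z = (\<Sum>d\<in>targets (fa_star cj x) z. rep x d z * cj (rep x d z))"
  using rep_mult[OF fx finite_star_supp[OF fx cj]] by (simp add: rep_star[OF fx cj] mult.commute)

lemma rep_nonzero_star_targets:
  assumes "finite {w. x w \<noteq> 0}" "field_involution cj" "rep x d z \<noteq> 0"
  shows "d \<in> targets (fa_star cj x) z"
  using assms by (intro rep_nonzero_targets) (simp add: rep_star involution_eq_0_iff)

definition some_out_edge :: "'v \<Rightarrow> 'e" where
  "some_out_edge u = (SOME e. e \<in> E1 \<and> s e = u)"

lemma some_out_edge: "regular E1 s u \<Longrightarrow> some_out_edge u \<in> E1 \<and> s (some_out_edge u) = u"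
  unfolding some_out_edge_def regular_def by (rule someI_ex) auto

lemma boundary_path_from_nonregular_iterate:
  "u \<in> V \<Longrightarrow> \<not> regular E1 s (((r \<circ> some_out_edge) ^^ k) u) \<Longrightarrow> \<exists>b. boundary b \<and> src b = u"
proof (induction k arbitrary: u)
  case 0
  then have "boundary (BFin u []) \<and> src (BFin u []) = u" by simp
  then show ?case by blast
next
  case (Suc k)
  show ?case
  proof (cases "regular E1 s u")
    case False
    then have "boundary (BFin u []) \<and> src (BFin u []) = u" using Suc.prems by simp
    then show ?thesis by blast
  next
    case True
    let ?e = "some_out_edge u"
    have e: "?e \<in> E1" "s ?e = u" using some_out_edge[OF True] by auto
    have "((r \<circ> some_out_edge) ^^ Suc k) u = ((r \<circ> some_out_edge) ^^ k) (r ?e)"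
      by (simp only: funpow_Suc_right comp_def)
    then have "\<not> regular E1 s (((r \<circ> some_out_edge) ^^ k) (r ?e))"
      using Suc.prems(2) by metis
    then obtain b where b: "boundary b" "src b = r ?e" using Suc.IH[of "r ?e"] e by (auto simp: comp_def)
    then have "boundary (bcons ?e b) \<and> src (bcons ?e b) = u" using boundary_bcons_iff e by simp
    then show ?thesis by blast
  qed
qed

lemma boundary_path_from:
  assumes "v \<in> V"
  shows "\<exists>b. boundary b \<and> src b = v"
proof (cases "\<exists>k. \<not> regular E1 s (((r \<circ> some_out_edge) ^^ k) v)")
  case True
  then show ?thesis using boundary_path_from_nonregular_iterate assms by blast
next
  case False
  then have reg: "regular E1 s (((r \<circ> some_out_edge) ^^ k) v)" for k by blast
  define f where "f k = some_out_edge (((r \<circ> some_out_edge) ^^ k) v)" for k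
  have "boundary (BInf f)"
  proof (simp, intro allI conjI)
    fix i
    show "f i \<in> E1" using some_out_edge[OF reg] unfolding f_def by blast
    have "s (f (Suc i)) = ((r \<circ> some_out_edge) ^^ Suc i) v"
      using some_out_edge[OF reg] unfolding f_def by blast
    then show "r (f i) = s (f (Suc i))" unfolding f_def by simp
  qed
  moreover have "src (BInf f) = v" using some_out_edge[OF reg[of 0]] by (simp add: f_def)
  ultimately show ?thesis by blast
qed

end

section \<open>Faithfulness of the representation\<close>

fun is_ghost :: "('v, 'e) gen \<Rightarrow> bool" where
  "is_ghost (Gx e) = True" | "is_ghost (Vx v) = False" | "is_ghost (Ex e) = False"

definition ghost_length :: "('v, 'e) gen list \<Rightarrow> nat" where
  "ghost_length w = length (filter is_ghost w)"

lemma ghost_length_normal_word: "ghost_length (normal_word (\<mu>, \<nu>, j)) = length \<nu>"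
  unfolding ghost_length_def normal_word_def by (auto simp: filter_map comp_def)

lemma map_edges_ghosts_inj: "map Ex a @ map Gx b = map Ex a' @ map Gx b' \<Longrightarrow> a = a' \<and> b = b'"
proof (induction a arbitrary: a')
  case Nil
  then show ?case
  proof (cases a')
    case Nil
    then show ?thesis using Nil.prems by (simp add: inj_map_eq_map inj_def)
  next
    case (Cons e a0)
    then show ?thesis using Nil.prems by (cases b) auto
  qed
next
  case (Cons e a)
  then show ?case
  proof (cases a')
    case Nil
    then show ?thesis using Cons.prems by (cases b') auto
  next
    case (Cons e' a0)
    then show ?thesis using Cons.prems Cons.IH[of a0] by auto
  qed
qed

context lpa_graph
begin

lemma normal_word_eq_vertex:
  "normal_word (\<mu>, \<nu>, j) = [Vx a] \<longleftrightarrow> \<mu> = [] \<and> \<nu> = [] \<and> j = a"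
  unfolding normal_word_def by (auto simp: append_eq_Cons_conv)

lemma normal_word_inj:
  assumes t: "(\<mu>, \<nu>, j) \<in> normal_triples" and t': "(\<mu>', \<nu>', j') \<in> normal_triples"
    and eq: "normal_word (\<mu>, \<nu>, j) = normal_word (\<mu>', \<nu>', j')"
  shows "(\<mu>, \<nu>, j) = (\<mu>', \<nu>', j')"
proof (cases "\<mu> = [] \<and> \<nu> = []")
  case True
  then show ?thesis using eq normal_word_eq_vertex[of \<mu>' \<nu>' j' j] by simp
next
  case False
  then have "\<not> (\<mu>' = [] \<and> \<nu>' = [])" using eq normal_word_eq_vertex[of \<mu> \<nu> j j'] by auto
  then have "(map Ex \<mu> @ map Gx (rev \<nu>) :: ('v, 'e) gen list) = map Ex \<mu>' @ map Gx (rev \<nu>')"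
    using eq False unfolding normal_word_def by auto
  then have \<mu>\<nu>: "\<mu> = \<mu>'" "\<nu> = \<nu>'" using map_edges_ghosts_inj by auto
  have "path_to \<mu> j" "path_to \<nu> j" "path_to \<mu> j'" "path_to \<nu> j'"
    using t t' \<mu>\<nu> by (auto simp: normal_triples_iff)
  then have "j = j'" using False path_to_last by metis
  then show ?thesis using \<mu>\<nu> by simp
qed

lemma src_bprefix: "src (bprefix \<mu> q) = (case \<mu> of [] \<Rightarrow> src q | f # _ \<Rightarrow> s f)"
  by (cases \<mu>) auto

lemma act_edges: "path_to \<mu> (src q) \<Longrightarrow> act_word (map Ex \<mu>) (q, n) = Some (bprefix \<mu> q, n + int (length \<mu>))"
proof (induction \<mu>)
  case Nil
  then show ?case by simp
next
  case (Cons e \<mu>)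
  then have "e \<in> E1" "r e = src (bprefix \<mu> q)" "path_to \<mu> (src q)"
    by (auto simp: src_bprefix split: list.splits)
  then show ?case using Cons.IH by (simp add: algebra_simps)
qed

lemma act_edgesD: "act_word (map Ex \<mu>) z = Some y \<Longrightarrow> y = (bprefix \<mu> (fst z), snd z + int (length \<mu>))"
proof (induction \<mu> arbitrary: y)
  case Nil
  then show ?case by (cases z) auto
next
  case (Cons e \<mu>)
  then obtain y0 where "act_word (map Ex \<mu>) z = Some y0" "act_gen (Ex e) y0 = Some y"
    by (auto simp: bind_eq_Some_conv)
  then show ?case using Cons.IH by (cases y0) (auto split: if_splits)
qed

lemma star_edges: "map gstar (rev (map Ex \<nu>)) = map Gx (rev \<nu>)"
  by (simp add: rev_map)

lemma act_ghosts: "path_to \<nu> (src q) \<Longrightarrow> act_word (map Gx (rev \<nu>)) (bprefix \<nu> q, n + int (length \<nu>)) = Some (q, n)"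
  using act_edges[of \<nu> q n] act_word_star[of "map Ex \<nu>"] by (simp add: star_edges)

lemma act_ghostsD: "act_word (map Gx (rev \<nu>)) x = Some z \<Longrightarrow> x = (bprefix \<nu> (fst z), snd z + int (length \<nu>))"
  using act_word_star[of "map Ex \<nu>" x z] act_edgesD[of \<nu> z x] by (simp add: star_edges)

lemma boundary_bprefix: "boundary q \<Longrightarrow> path_to \<nu> (src q) \<Longrightarrow> boundary (bprefix \<nu> q)"
proof (induction \<nu>)
  case (Cons e \<nu>)
  then have "e \<in> E1" "r e = src (bprefix \<nu> q)" "path_to \<nu> (src q)"
    by (auto simp: src_bprefix split: list.splits)
  then show ?case using Cons.IH Cons.prems boundary_bcons_iff by simp
qed simp

lemma act_normal_word:
  assumes t: "(\<mu>, \<nu>, j) \<in> normal_triples" and src_b: "src b = j"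
  shows "act_word (normal_word (\<mu>, \<nu>, j)) (bprefix \<nu> b, n) = Some (bprefix \<mu> b, n - int (length \<nu>) + int (length \<mu>))"
proof -
  have ep: "path_to \<mu> j" "path_to \<nu> j" "j \<in> V" using t by (auto simp: normal_triples_iff)
  show ?thesis
  proof (cases "\<mu> = [] \<and> \<nu> = []")
    case True
    then show ?thesis using ep src_b by simp
  next
    case False
    then have w: "normal_word (\<mu>, \<nu>, j) = map Ex \<mu> @ map Gx (rev \<nu>)" unfolding normal_word_def by auto
    have "act_word (map Gx (rev \<nu>)) (bprefix \<nu> b, (n - int (length \<nu>)) + int (length \<nu>)) = Some (b, n - int (length \<nu>))"
      using act_ghosts ep src_b by blast
    then have "act_word (map Gx (rev \<nu>)) (bprefix \<nu> b, n) = Some (b, n - int (length \<nu>))" by simp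
    then show ?thesis unfolding w act_word_append using act_edges ep src_b by simp
  qed
qed

lemma act_normal_word_unique:
  assumes b: "src b = j" and len: "length \<nu> \<le> length \<nu>'" and len2: "length \<nu>' \<le> length \<nu> \<or> b = BFin j []"
    and act: "act_word (normal_word (\<mu>', \<nu>', j')) (bprefix \<nu> b, n) = Some (bprefix \<mu> b, n - int (length \<nu>) + int (length \<mu>))"
  shows "normal_word (\<mu>', \<nu>', j') = normal_word (\<mu>, \<nu>, j)"
proof (cases "\<mu>' = [] \<and> \<nu>' = []")
  case True
  then have "\<nu> = []" using len by simp
  then have "Some (b, n) = Some (bprefix \<mu> b, n + int (length \<mu>))" "src b = j'"
    using act True by (auto split: if_splits)
  then have "\<mu> = []" "j' = j" using b by auto
  then show ?thesis using True \<open>\<nu> = []\<close> by simp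
next
  case False
  then have w: "normal_word (\<mu>', \<nu>', j') = map Ex \<mu>' @ map Gx (rev \<nu>')" unfolding normal_word_def by auto
  obtain z where z: "act_word (map Gx (rev \<nu>')) (bprefix \<nu> b, n) = Some z"
    "act_word (map Ex \<mu>') z = Some (bprefix \<mu> b, n - int (length \<nu>) + int (length \<mu>))"
    using act unfolding w act_word_append by (auto simp: bind_eq_Some_conv)
  have "(bprefix \<nu> b, n) = (bprefix \<nu>' (fst z), snd z + int (length \<nu>'))" using act_ghostsD[OF z(1)] .
  then have z1: "bprefix \<nu> b = bprefix \<nu>' (fst z)" "n = snd z + int (length \<nu>')" by auto
  obtain \<delta> where d: "\<nu>' = \<nu> @ \<delta>" "b = bprefix \<delta> (fst z)" using bprefix_eq_bprefixD[OF z1(1) len] by blast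
  have "\<delta> = []"
  proof (cases "length \<nu>' \<le> length \<nu>")
    case True then show ?thesis using d by simp
  next
    case False then have "b = BFin j []" using len2 by simp
    then show ?thesis using d bprefix_eq_BFin_Nil by metis
  qed
  then have nn: "\<nu>' = \<nu>" "fst z = b" using d by auto
  have "(bprefix \<mu> b, n - int (length \<nu>) + int (length \<mu>)) = (bprefix \<mu>' (fst z), snd z + int (length \<mu>'))"
    using act_edgesD[OF z(2)] .
  then have "bprefix \<mu> b = bprefix \<mu>' b" "length \<mu> = length \<mu>'" using z1(2) nn by auto
  then have "\<mu>' = \<mu>" using bprefix_inj by metis
  then have "\<not> (\<mu> = [] \<and> \<nu> = [])" using False nn by simp
  then have "normal_word (\<mu>, \<nu>, j) = map Ex \<mu> @ map Gx (rev \<nu>)" unfolding normal_word_def by auto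
  then show ?thesis using w nn \<open>\<mu>' = \<mu>\<close> by simp
qed

text \<open>Starting from the boundary path \<nu> b and ending at \<mu> b singles out the coefficient of
  \<mu> \<nu>^*: the ghost-length hypothesis excludes words with a longer ghost part, which could
  otherwise strip off more of b, unless b is the trivial path at a sink or infinite emitter.\<close>
lemma rep_normal_coeff:
  fixes q :: "('v,'e,'k::field) fa"
  assumes fq: "finite {w. q w \<noteq> 0}" and ns: "normally_supported q"
    and t: "(\<mu>, \<nu>, j) \<in> normal_triples" and src_b: "src b = j"
    and bnd: "\<And>w. q w \<noteq> 0 \<Longrightarrow> length \<nu> \<le> ghost_length w \<and> (ghost_length w \<le> length \<nu> \<or> b = BFin j [])"
  shows "rep q (bprefix \<nu> b, 0) (bprefix \<mu> b, int (length \<mu>) - int (length \<nu>)) = q (normal_word (\<mu>, \<nu>, j))"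
proof -
  let ?x = "(bprefix \<nu> b, 0::int)" and ?y = "(bprefix \<mu> b, int (length \<mu>) - int (length \<nu>))"
  have "rep q ?x ?y = (\<Sum>w\<in>{w. q w \<noteq> 0}. if w = normal_word (\<mu>, \<nu>, j) then q w else 0)"
    unfolding rep_def
  proof (intro sum.cong refl)
    fix w assume w: "w \<in> {w. q w \<noteq> 0}"
    then obtain t' where t': "t' \<in> normal_triples" "w = normal_word t'" using ns unfolding normally_supported_def by auto
    obtain \<mu>' \<nu>' j' where tt: "t' = (\<mu>', \<nu>', j')" by (cases t') auto
    have len: "length \<nu> \<le> length \<nu>'" "length \<nu>' \<le> length \<nu> \<or> b = BFin j []"
    proof -
      have "ghost_length w = length \<nu>'" using t'(2) tt by (simp add: ghost_length_normal_word)
      then show "length \<nu> \<le> length \<nu>'" "length \<nu>' \<le> length \<nu> \<or> b = BFin j []"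
        using bnd[of w] w by auto
    qed
    show "q w * of_bool (act_word w ?x = Some ?y) = (if w = normal_word (\<mu>, \<nu>, j) then q w else 0)"
    proof (cases "w = normal_word (\<mu>, \<nu>, j)")
      case True
      have "act_word w ?x = Some ?y" using act_normal_word[OF t src_b, of 0] True by simp
      then show ?thesis using True by simp
    next
      case False
      have "act_word w ?x \<noteq> Some ?y"
      proof
        assume "act_word w ?x = Some ?y"
        then have "act_word (normal_word (\<mu>', \<nu>', j')) (bprefix \<nu> b, 0) = Some (bprefix \<mu> b, 0 - int (length \<nu>) + int (length \<mu>))"
          using t' tt by simp
        then have "normal_word (\<mu>', \<nu>', j') = normal_word (\<mu>, \<nu>, j)"
          using act_normal_word_unique[OF src_b len] t' tt by blast
        then show False using False t' tt by simp
      qed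
      then show ?thesis using False by simp
    qed
  qed
  also have "\<dots> = q (normal_word (\<mu>, \<nu>, j))" using fq by (auto simp: sum.delta')
  finally show ?thesis .
qed

lemma inj_on_normal_word: "inj_on normal_word normal_triples"
  by (rule inj_onI) (metis normal_word_inj prod_cases3)

definition extend_triple :: "'e list \<times> 'e list \<times> 'v \<Rightarrow> 'e \<Rightarrow> 'e list \<times> 'e list \<times> 'v" where
  "extend_triple t e = (case t of (\<mu>, \<nu>, j) \<Rightarrow> (\<mu> @ [e], \<nu> @ [e], r e))"

lemma extend_triple_normal:
  "(\<mu>, \<nu>, j) \<in> normal_triples \<Longrightarrow> e \<in> E1 \<Longrightarrow> s e = j \<Longrightarrow> extend_triple (\<mu>, \<nu>, j) e \<in> normal_triples"
  unfolding extend_triple_def by (auto simp: normal_triples_iff path_to_snoc)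

lemma normal_word_extend:
  "normal_word (extend_triple (\<mu>, \<nu>, j) e) = map Ex \<mu> @ [Ex e, Gx e] @ map Gx (rev \<nu>)"
  unfolding extend_triple_def normal_word_def by simp

lemma ghost_length_extend: "ghost_length (normal_word (extend_triple (\<mu>, \<nu>, j) e)) = Suc (length \<nu>)"
  using ghost_length_normal_word[of "\<mu> @ [e]" "\<nu> @ [e]" "r e"] unfolding extend_triple_def by simp

text \<open>The Cuntz-Krieger relation at the end vertex j, applied inside \<mu> \<nu>^*.\<close>
definition ck_expansion :: "'e list \<times> 'e list \<times> 'v \<Rightarrow> ('v,'e,'k::field) fa" where
  "ck_expansion t = (\<lambda>w. \<Sum>e\<in>{e \<in> E1. s e = snd (snd t)}. mono (normal_word (extend_triple t e)) w)"

lemma cong_ck_expansion: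
  assumes t: "(\<mu>, \<nu>, j) \<in> normal_triples" and reg: "regular E1 s j"
  shows "cong (mono (normal_word (\<mu>, \<nu>, j))) (ck_expansion (\<mu>, \<nu>, j) :: ('v,'e,'k::field) fa)"
proof -
  have ep: "path_to \<mu> j" "path_to \<nu> j" "j \<in> V" using t by (auto simp: normal_triples_iff)
  let ?A = "map Ex \<mu>" and ?B = "map Gx (rev \<nu>)"
  have A: "set ?A \<subseteq> gens V E1" and B: "set ?B \<subseteq> gens V E1" using ep by (auto dest!: path_to_edges)
  have insert_vertex: "cong (mono (normal_word (\<mu>, \<nu>, j))) (mono (?A @ [Vx j] @ ?B) :: ('v,'e,'k) fa)"
  proof (cases "\<mu> = [] \<and> \<nu> = []")
    case True
    then show ?thesis using cong_refl by simp
  next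
    case False
    show ?thesis
    proof (cases \<mu> rule: rev_cases)
      case (snoc \<mu>0 f)
      have f: "f \<in> E1" "r f = j" using ep snoc by (auto simp: path_to_snoc)
      have "set (map Ex \<mu>0) \<subseteq> gens V E1" using A snoc by auto
      from cong_mono_context[OF cong_sym[OF cong_edge_range[OF f(1)]] this B]
      show ?thesis using snoc f False unfolding normal_word_def by simp
    next
      case Nil
      then obtain \<nu>0 f where nf: "\<nu> = \<nu>0 @ [f]" using False by (cases \<nu> rule: rev_cases) auto
      have f: "f \<in> E1" "r f = j" using ep nf by (auto simp: path_to_snoc)
      have "set (map Gx (rev \<nu>0)) \<subseteq> gens V E1" using B nf by auto
      from cong_mono_context[OF cong_sym[OF cong_range_ghost[OF f(1)]] _ this, of "[]"]
      show ?thesis using Nil nf f unfolding normal_word_def by simp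
    qed
  qed
  have "cong (mono [Vx j]) (\<lambda>w. \<Sum>e\<in>{e \<in> E1. s e = j}. 1 * mono [Ex e, Gx e] w :: 'k)"
    using cong_CK2[OF ep(3) reg] by simp
  from cong_lincomb_context[OF this A B]
  have "cong (mono (?A @ [Vx j] @ ?B))
     (\<lambda>w. \<Sum>e\<in>{e \<in> E1. s e = j}. 1 * mono (?A @ [Ex e, Gx e] @ ?B) w :: 'k)" .
  then show ?thesis using cong_trans[OF insert_vertex]
    by (simp add: ck_expansion_def normal_word_extend)
qed

lemma ck_expansion_elems:
  assumes t: "(\<mu>, \<nu>, j) \<in> normal_triples" and reg: "regular E1 s j"
  shows "(ck_expansion (\<mu>, \<nu>, j) :: ('v,'e,'k::field) fa) \<in> fa_elems V E1"
  unfolding ck_expansion_def snd_conv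
proof (rule fa_elems_sum)
  show "finite {e \<in> E1. s e = j}" using reg by (simp add: regular_def)
  fix e assume "e \<in> {e \<in> E1. s e = j}"
  then have "extend_triple (\<mu>, \<nu>, j) e \<in> normal_triples" using extend_triple_normal[OF t] by simp
  then show "(mono (normal_word (extend_triple (\<mu>, \<nu>, j) e)) :: ('v,'e,'k) fa) \<in> fa_elems V E1"
    by (intro fa_elems_mono normal_word_gens) auto
qed

lemma ck_expansion_supp:
  assumes t: "(\<mu>, \<nu>, j) \<in> normal_triples" and nz: "(ck_expansion (\<mu>, \<nu>, j) :: ('v,'e,'k::field) fa) w \<noteq> 0"
  shows "(\<exists>t'\<in>normal_triples. w = normal_word t') \<and> ghost_length w = Suc (length \<nu>)"
proof -
  obtain e where "e \<in> {e \<in> E1. s e = j}" "(mono (normal_word (extend_triple (\<mu>, \<nu>, j) e)) w :: 'k) \<noteq> 0"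
    using nz unfolding ck_expansion_def by (auto dest: sum.not_neutral_contains_not_neutral)
  then have "extend_triple (\<mu>, \<nu>, j) e \<in> normal_triples" "w = normal_word (extend_triple (\<mu>, \<nu>, j) e)"
    using extend_triple_normal[OF t] by (auto simp: mono_def split: if_splits)
  then show ?thesis using ghost_length_extend by blast
qed

definition level_triples :: "('v,'e,'k::field) fa \<Rightarrow> nat \<Rightarrow> ('e list \<times> 'e list \<times> 'v) set" where
  "level_triples q n = {t \<in> normal_triples. q (normal_word t) \<noteq> 0 \<and> ghost_length (normal_word t) = n}"

lemma finite_level_triples:
  assumes "finite {w. q w \<noteq> 0}"
  shows "finite (level_triples q n)"
proof (rule finite_imageD)
  show "finite (normal_word ` level_triples q n)"
    by (rule finite_subset[OF _ assms]) (auto simp: level_triples_def)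
  show "inj_on normal_word (level_triples q n)"
    using inj_on_normal_word by (rule inj_on_subset) (auto simp: level_triples_def)
qed

lemma level_part:
  assumes fq: "finite {w. q w \<noteq> 0}" and ns: "normally_supported q"
  shows "(\<lambda>w. \<Sum>t\<in>level_triples q n. q (normal_word t) * mono (normal_word t) w) =
    (\<lambda>w. if ghost_length w = n then q w else 0)"
proof
  fix w
  show "(\<Sum>t\<in>level_triples q n. q (normal_word t) * mono (normal_word t) w) =
    (if ghost_length w = n then q w else 0)"
  proof (cases "\<exists>t0\<in>level_triples q n. w = normal_word t0")
    case True
    then obtain t0 where t0: "t0 \<in> level_triples q n" "w = normal_word t0" by blast
    have "(\<Sum>t\<in>level_triples q n. q (normal_word t) * mono (normal_word t) w) =
        (\<Sum>t\<in>level_triples q n. if t = t0 then q w else 0)"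
    proof (intro sum.cong refl)
      fix t assume "t \<in> level_triples q n"
      then have "normal_word t = normal_word t0 \<longleftrightarrow> t = t0"
        using inj_on_normal_word t0(1) unfolding level_triples_def by (auto dest: inj_onD)
      then show "q (normal_word t) * mono (normal_word t) w = (if t = t0 then q w else 0)"
        using t0 by (auto simp: mono_def)
    qed
    also have "\<dots> = q w" using t0(1) finite_level_triples[OF fq] by simp
    finally show ?thesis using t0 by (simp add: level_triples_def)
  next
    case False
    have "q w = 0" if "ghost_length w = n"
      using False that ns unfolding normally_supported_def level_triples_def by blast
    moreover have "(\<Sum>t\<in>level_triples q n. q (normal_word t) * mono (normal_word t) w) = 0"
      using False by (intro sum.neutral) (auto simp: mono_def)
    ultimately show ?thesis by simp
  qed
qed

lemma level_ck_expansion: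
  fixes q :: "('v,'e,'k::field) fa"
  assumes fq: "finite {w. q w \<noteq> 0}"
    and reg: "\<And>\<mu> \<nu> j. (\<mu>, \<nu>, j) \<in> level_triples q n \<Longrightarrow> regular E1 s j \<and> n < N"
  defines "E \<equiv> \<lambda>w. \<Sum>t\<in>level_triples q n. q (normal_word t) * ck_expansion t w"
  shows "cong (\<lambda>w. \<Sum>t\<in>level_triples q n. q (normal_word t) * mono (normal_word t) w) E"
    and "E \<in> fa_elems V E1"
    and "E w \<noteq> 0 \<Longrightarrow> (\<exists>t\<in>normal_triples. w = normal_word t) \<and> Suc n \<le> ghost_length w \<and> ghost_length w \<le> N"
proof -
  have fin: "finite (level_triples q n)" using fq by (rule finite_level_triples)
  have level: "(\<mu>, \<nu>, j) \<in> normal_triples \<and> regular E1 s j \<and> n < N \<and> length \<nu> = n"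
    if "(\<mu>, \<nu>, j) \<in> level_triples q n" for \<mu> \<nu> j
    using that reg[OF that] unfolding level_triples_def by (auto simp: ghost_length_normal_word)
  show "cong (\<lambda>w. \<Sum>t\<in>level_triples q n. q (normal_word t) * mono (normal_word t) w) E"
    unfolding E_def
  proof (rule cong_lincomb[OF fin])
    fix t assume "t \<in> level_triples q n"
    moreover obtain \<mu> \<nu> j where "t = (\<mu>, \<nu>, j)" by (cases t)
    ultimately show "cong (mono (normal_word t)) (ck_expansion t)" using level cong_ck_expansion by blast
  qed
  show "E \<in> fa_elems V E1" unfolding E_def
  proof (rule fa_elems_lincomb[OF fin])
    fix t assume "t \<in> level_triples q n"
    moreover obtain \<mu> \<nu> j where "t = (\<mu>, \<nu>, j)" by (cases t)
    ultimately show "ck_expansion t \<in> fa_elems V E1" using level ck_expansion_elems by blast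
  qed
  assume "E w \<noteq> 0"
  then obtain t where "t \<in> level_triples q n" "q (normal_word t) * ck_expansion t w \<noteq> 0" unfolding E_def
    by (meson sum.not_neutral_contains_not_neutral)
  moreover obtain \<mu> \<nu> j where "t = (\<mu>, \<nu>, j)" by (cases t)
  ultimately have "(\<mu>, \<nu>, j) \<in> level_triples q n" "(ck_expansion (\<mu>, \<nu>, j) :: ('v,'e,'k) fa) w \<noteq> 0"
    by auto
  then show "(\<exists>t\<in>normal_triples. w = normal_word t) \<and> Suc n \<le> ghost_length w \<and> ghost_length w \<le> N"
    using level ck_expansion_supp by fastforce
qed

lemma raise_lowest_level:
  fixes q :: "('v,'e,'k::field) fa"
  assumes qe: "q \<in> fa_elems V E1" and ns: "normally_supported q"
    and bnd: "\<And>w. q w \<noteq> 0 \<Longrightarrow> n \<le> ghost_length w \<and> ghost_length w \<le> N"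
    and reg: "\<And>\<mu> \<nu> j. (\<mu>, \<nu>, j) \<in> level_triples q n \<Longrightarrow> regular E1 s j \<and> n < N"
  shows "\<exists>q'. q' \<in> fa_elems V E1 \<and> normally_supported q' \<and> cong q q' \<and>
    (\<forall>w. q' w \<noteq> 0 \<longrightarrow> Suc n \<le> ghost_length w \<and> ghost_length w \<le> N)"
proof -
  have fq: "finite {w. q w \<noteq> 0}" using qe by (rule fa_elemsD)
  define qn :: "('v,'e,'k) fa" where
    "qn = (\<lambda>w. \<Sum>t\<in>level_triples q n. q (normal_word t) * mono (normal_word t) w)"
  define E :: "('v,'e,'k) fa" where "E = (\<lambda>w. \<Sum>t\<in>level_triples q n. q (normal_word t) * ck_expansion t w)"
  have E: "cong qn E" "E \<in> fa_elems V E1"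
      "\<And>w. E w \<noteq> 0 \<Longrightarrow> (\<exists>t\<in>normal_triples. w = normal_word t) \<and> Suc n \<le> ghost_length w \<and> ghost_length w \<le> N"
    unfolding qn_def E_def using level_ck_expansion[OF fq] reg by blast+
  define q' where "q' = fa_add (fa_diff q qn) E"
  have "fa_diff q q' = fa_diff qn E" unfolding q'_def by (rule ext) (simp add: fa_diff_def fa_add_def)
  then have "cong q q'" using E(1) unfolding cong_def by simp
  have qn_level: "qn w = (if ghost_length w = n then q w else 0)" for w
    using fun_cong[OF level_part[OF fq ns, of n]] unfolding qn_def by simp
  have "qn \<in> fa_elems V E1"
    by (rule fa_elems_supp_subset[of q _ _ q]) (use qe qn_level in \<open>auto split: if_splits\<close>)
  then have "q' \<in> fa_elems V E1" unfolding q'_def using qe E(2) by (intro fa_elems_add fa_elems_diff)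
  moreover have "(\<exists>t\<in>normal_triples. w = normal_word t) \<and> Suc n \<le> ghost_length w \<and> ghost_length w \<le> N"
    if nz: "q' w \<noteq> 0" for w
  proof (cases "q w - qn w \<noteq> 0")
    case True
    then have "ghost_length w \<noteq> n" "q w \<noteq> 0" using qn_level[of w] by (auto split: if_splits)
    then show ?thesis using ns bnd unfolding normally_supported_def by fastforce
  next
    case False
    then have "E w \<noteq> 0" using nz unfolding q'_def fa_add_def fa_diff_def by simp
    then show ?thesis by (rule E(3))
  qed
  then have "normally_supported q' \<and> (\<forall>w. q' w \<noteq> 0 \<longrightarrow> Suc n \<le> ghost_length w \<and> ghost_length w \<le> N)"
    unfolding normally_supported_def by blast
  ultimately show ?thesis using \<open>cong q q'\<close> by blast
qed

lemma rep_cong: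
  assumes "p \<in> fa_elems V E1" "q \<in> fa_elems V E1" "cong p q" "boundary_state x"
  shows "rep p x y = rep (q :: ('v,'e,'k::field) fa) x y"
proof -
  have "rep (fa_diff p q) x y = 0" using rep_ideal_zero assms(3,4) unfolding cong_def by blast
  then show ?thesis using assms(1,2) by (simp add: rep_diff fa_elemsD(1))
qed

text \<open>A nonzero lowest-level coefficient at a sink or infinite emitter, or at the top level,
  would be detected by the representation.\<close>
lemma lowest_level_regular:
  fixes q :: "('v,'e,'k::field) fa"
  assumes qe: "q \<in> fa_elems V E1" and ns: "normally_supported q"
    and bnd: "\<And>w. q w \<noteq> 0 \<Longrightarrow> n \<le> ghost_length w \<and> ghost_length w \<le> N"
    and ker: "\<And>x y. boundary_state x \<Longrightarrow> rep q x y = 0"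
    and t: "(\<mu>, \<nu>, j) \<in> level_triples q n"
  shows "regular E1 s j \<and> n < N"
proof (rule ccontr)
  assume nc: "\<not> (regular E1 s j \<and> n < N)"
  have t': "(\<mu>, \<nu>, j) \<in> normal_triples" "q (normal_word (\<mu>, \<nu>, j)) \<noteq> 0" "length \<nu> = n"
    using t unfolding level_triples_def by (auto simp: ghost_length_normal_word)
  then have j: "path_to \<nu> j" "j \<in> V" by (auto simp: normal_triples_iff)
  obtain b where b: "boundary b" "src b = j" "\<not> regular E1 s j \<longrightarrow> b = BFin j []"
  proof (cases "regular E1 s j")
    case True
    then show ?thesis using boundary_path_from[OF j(2)] that by blast
  next
    case False
    then show ?thesis using j(2) that[of "BFin j []"] by simp
  qed
  have "length \<nu> \<le> ghost_length w \<and> (ghost_length w \<le> length \<nu> \<or> b = BFin j [])" if "q w \<noteq> 0" for w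
    using bnd[OF that] nc b(3) t'(3) by auto
  then have "rep q (bprefix \<nu> b, 0) (bprefix \<mu> b, int (length \<mu>) - int (length \<nu>)) = q (normal_word (\<mu>, \<nu>, j))"
    using rep_normal_coeff[OF fa_elemsD(1)[OF qe] ns t'(1) b(2)] by blast
  moreover have "boundary_state (bprefix \<nu> b, 0)"
    using boundary_bprefix[OF b(1)] j b(2) by (simp add: boundary_state_def)
  ultimately show False using ker t'(2) by simp
qed

lemma rep_faithful_normal:
  fixes q :: "('v,'e,'k::field) fa"
  assumes "q \<in> fa_elems V E1" "normally_supported q"
    and "\<And>w. q w \<noteq> 0 \<Longrightarrow> n \<le> ghost_length w \<and> ghost_length w \<le> N"
    and "\<And>x y. boundary_state x \<Longrightarrow> rep q x y = 0"
  shows "q \<in> lpa_ideal V E1 s r"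
  using assms
proof (induction "Suc N - n" arbitrary: n q)
  case 0
  then have "q = fa_zero" by (force simp: fa_zero_def)
  then show ?case by (simp add: lpa_ideal.zero)
next
  case (Suc d)
  have reg: "regular E1 s j \<and> n < N" if "(\<mu>, \<nu>, j) \<in> level_triples q n" for \<mu> \<nu> j
    by (rule lowest_level_regular[OF Suc.prems(1) Suc.prems(2) Suc.prems(3) Suc.prems(4) that])
  have "\<exists>q'. q' \<in> fa_elems V E1 \<and> normally_supported q' \<and> cong q q' \<and>
      (\<forall>w. q' w \<noteq> 0 \<longrightarrow> Suc n \<le> ghost_length w \<and> ghost_length w \<le> N)"
    by (rule raise_lowest_level[OF Suc.prems(1,2)]) (simp_all add: Suc.prems(3) reg)
  then obtain q' where q': "q' \<in> fa_elems V E1" "normally_supported q'" "cong q q'"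
      "\<And>w. q' w \<noteq> 0 \<Longrightarrow> Suc n \<le> ghost_length w \<and> ghost_length w \<le> N"
    by blast
  moreover have "rep q' x y = 0" if "boundary_state x" for x y
    using rep_cong[OF Suc.prems(1) q'(1,3) that] Suc.prems(4)[OF that] by simp
  moreover have "d = Suc N - Suc n" using Suc.hyps(2) by simp
  ultimately have "q' \<in> lpa_ideal V E1 s r" using Suc.hyps(1) by blast
  then show ?case using cong_ideal[OF q'(3)] by blast
qed

lemma rep_non_boundary_target:
  assumes "boundary_state x" "\<not> boundary_state y"
  shows "rep p x y = 0"
  unfolding rep_def
proof (intro sum.neutral ballI)
  fix w
  have "act_word w x \<noteq> Some y" using act_word_boundary assms by blast
  then show "p w * of_bool (act_word w x = Some y) = 0" by simp
qed

theorem rep_faithful: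
  fixes p :: "('v,'e,'k::field) fa"
  assumes pe: "p \<in> fa_elems V E1"
    and ker: "\<And>x y. boundary_state x \<Longrightarrow> boundary_state y \<Longrightarrow> rep p x y = 0"
  shows "p \<in> lpa_ideal V E1 s r"
proof -
  obtain q :: "('v,'e,'k) fa" where q: "q \<in> fa_elems V E1" "normally_supported q" "cong p q"
    using cong_normally_supported[OF pe] by blast
  define N where "N = (\<Sum>w\<in>{w. q w \<noteq> 0}. ghost_length w)"
  have "ghost_length w \<le> N" if "q w \<noteq> 0" for w
    unfolding N_def using that fa_elemsD(1)[OF q(1)] by (intro member_le_sum) auto
  moreover have "rep q x y = 0" if "boundary_state x" for x y
    using rep_cong[OF pe q(1,3) that] ker rep_non_boundary_target that by metis
  ultimately have "q \<in> lpa_ideal V E1 s r" using rep_faithful_normal[OF q(1,2), of 0 N] by blast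
  then show ?thesis using cong_ideal[OF q(3)] by blast
qed

end

section \<open>Positive definiteness\<close>

lemma pos_def_field_sum_zeroD:
  assumes pd: "pos_def_field cj" and A: "finite A" and z: "(\<Sum>a\<in>A. f a * cj (f a)) = 0" and a: "a \<in> A"
  shows "f a = 0"
proof -
  obtain h where h: "bij_betw h {0..<card A} A" using ex_bij_betw_nat_finite[OF A] by blast
  have "(\<Sum>i<card A. f (h i) * cj (f (h i))) = 0"
    using sum.reindex_bij_betw[OF h, of "\<lambda>a. f a * cj (f a)"] z by (simp add: atLeast0LessThan)
  then have zero: "f (h i) = 0" if "i < card A" for i
    by (rule pd[unfolded pos_def_field_def, rule_format, OF _ that])
  have "a \<in> h ` {0..<card A}" using h a by (simp add: bij_betw_def)
  then obtain i where "i < card A" "h i = a" by auto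
  then show ?thesis using zero by blast
qed

lemma fa_star_vertex:
  fixes k :: "'k::field"
  assumes cj: "field_involution cj"
  shows "fa_star cj (fa_smult k (mono [Vx v])) = (fa_smult (cj k) (mono [Vx v]) :: ('v,'e,'k) fa)"
proof
  fix w :: "('v,'e) gen list"
  have "gstar g = Vx v \<longleftrightarrow> g = Vx v" for g :: "('v,'e) gen" by (cases g) auto
  then have "map gstar (rev w) = [Vx v] \<longleftrightarrow> w = [Vx v]" by (cases w rule: rev_cases) auto
  then show "fa_star cj (fa_smult k (mono [Vx v])) w = fa_smult (cj k) (mono [Vx v]) w"
    unfolding fa_star_def fa_smult_def mono_def
    by (simp add: involution_mult[OF cj] involution_1[OF cj] involution_0[OF cj])
qed

context lpa_graph
begin

lemma vertex_multiple_in_idealD: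
  assumes "v \<in> V" "fa_smult k (mono [Vx v]) \<in> lpa_ideal V E1 s r"
  shows "k = 0"
proof -
  obtain b where b: "boundary b" "src b = v" using boundary_path_from[OF assms(1)] by blast
  then have "rep (fa_smult k (mono [Vx v])) (b, 0) (b, 0) = 0"
    using rep_ideal_zero[OF assms(2)] by (simp add: boundary_state_def)
  moreover have "rep (fa_smult k (mono [Vx v])) (b, 0) (b, 0) = k"
    using b assms(1) by (simp add: rep_smult finite_mono_supp rep_mono)
  ultimately show ?thesis by simp
qed

lemma pos_def_field_if_pos_def_lpa:
  fixes cj :: "'k::field \<Rightarrow> 'k"
  assumes "V \<noteq> {}" and cj: "field_involution cj" and L: "pos_def_lpa V E1 s r cj"
  shows "pos_def_field cj"
  unfolding pos_def_field_def
proof (intro allI impI)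
  fix n and k :: "nat \<Rightarrow> 'k" and i assume z: "(\<Sum>i<n. k i * cj (k i)) = 0" and i: "i < n"
  obtain v where v: "v \<in> V" using assms(1) by blast
  define X :: "nat \<Rightarrow> ('v,'e,'k) fa" where "X i = fa_smult (k i) (mono [Vx v])" for i
  have "(\<lambda>w. \<Sum>i<n. fa_mult (X i) (fa_star cj (X i)) w) = fa_zero"
  proof
    fix w :: "('v,'e) gen list"
    have "(\<Sum>i<n. fa_mult (X i) (fa_star cj (X i)) w) = (\<Sum>i<n. k i * cj (k i)) * mono [Vx v, Vx v] w"
      unfolding X_def fa_star_vertex[OF cj] fa_mult_smult
      by (simp add: fa_mult_mono fa_smult_def sum_distrib_right)
    then show "(\<Sum>i<n. fa_mult (X i) (fa_star cj (X i)) w) = fa_zero w" using z by (simp add: fa_zero_def)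
  qed
  then have "(\<lambda>w. \<Sum>i<n. fa_mult (X i) (fa_star cj (X i)) w) \<in> lpa_ideal V E1 s r"
    by (simp add: lpa_ideal.zero)
  moreover have "X i \<in> fa_elems V E1" for i
    unfolding X_def using v by (intro fa_elems_smult fa_elems_mono) auto
  ultimately have "\<forall>i<n. X i \<in> lpa_ideal V E1 s r"
    using L unfolding pos_def_lpa_def by (elim allE[of _ n] allE[of _ X]) simp
  then have "X i \<in> lpa_ideal V E1 s r" using i by blast
  then show "k i = 0" unfolding X_def by (rule vertex_multiple_in_idealD[OF v])
qed

lemma rep_zero_if_sum_mult_star_in_ideal:
  fixes x :: "nat \<Rightarrow> ('v,'e,'k::field) fa"
  assumes cj: "field_involution cj" and F: "pos_def_field cj"
    and fx: "\<And>i. i < n \<Longrightarrow> finite {w. x i w \<noteq> 0}"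
    and S: "(\<lambda>w. \<Sum>i<n. fa_mult (x i) (fa_star cj (x i)) w) \<in> lpa_ideal V E1 s r"
    and i: "i < n" and z: "boundary_state z"
  shows "rep (x i) d z = 0"
proof (rule ccontr)
  assume nz: "rep (x i) d z \<noteq> 0"
  define D where "D j = targets (fa_star cj (x j)) z" for j
  have fD: "finite (D j)" if "j < n" for j
    unfolding D_def using that by (intro finite_targets finite_star_supp fx cj)
  have "0 = rep (\<lambda>w. \<Sum>j<n. fa_mult (x j) (fa_star cj (x j)) w) z z"
    using rep_ideal_zero[OF S z] by simp
  also have "\<dots> = (\<Sum>j<n. rep (fa_mult (x j) (fa_star cj (x j))) z z)"
    by (rule rep_sum) (auto intro: finite_mult_supp fx finite_star_supp[OF _ cj])
  also have "\<dots> = (\<Sum>j<n. \<Sum>d\<in>D j. rep (x j) d z * cj (rep (x j) d z))"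
    unfolding D_def by (intro sum.cong refl rep_mult_star_diag fx cj) simp
  also have "\<dots> = (\<Sum>(j, d)\<in>Sigma {..<n} D. rep (x j) d z * cj (rep (x j) d z))"
    by (rule sum.Sigma) (use fD in auto)
  finally have "(\<Sum>p\<in>Sigma {..<n} D. rep (x (fst p)) (snd p) z * cj (rep (x (fst p)) (snd p) z)) = 0"
    by (simp add: split_def)
  moreover have "(i, d) \<in> Sigma {..<n} D"
    using rep_nonzero_star_targets[OF fx[OF i] cj nz] i unfolding D_def by simp
  moreover have "finite (Sigma {..<n} D)" using fD by (intro finite_SigmaI) auto
  ultimately have "rep (x i) d z = 0"
    using pos_def_field_sum_zeroD[OF F, of "Sigma {..<n} D" "\<lambda>p. rep (x (fst p)) (snd p) z" "(i, d)"]
    by simp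
  then show False using nz by simp
qed

lemma pos_def_lpa_if_pos_def_field:
  fixes cj :: "'k::field \<Rightarrow> 'k"
  assumes cj: "field_involution cj" and F: "pos_def_field cj"
  shows "pos_def_lpa V E1 s r cj"
  unfolding pos_def_lpa_def
proof (intro allI impI)
  fix n and x :: "nat \<Rightarrow> ('v,'e,'k) fa" and i
  assume xe: "\<forall>i<n. x i \<in> fa_elems V E1"
    and S: "(\<lambda>w. \<Sum>i<n. fa_mult (x i) (fa_star cj (x i)) w) \<in> lpa_ideal V E1 s r" and i: "i < n"
  have fx: "finite {w. x j w \<noteq> 0}" if "j < n" for j using xe that fa_elemsD(1) by blast
  show "x i \<in> lpa_ideal V E1 s r"
    using xe i rep_zero_if_sum_mult_star_in_ideal[OF cj F fx S i] by (intro rep_faithful) auto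
qed

end

theorem mainTheorem11:
  fixes V :: "'v set" and E1 :: "'e set" and s r :: "'e \<Rightarrow> 'v"
    and cj :: "'k::field \<Rightarrow> 'k"
  assumes "is_graph V E1 s r"
    and "V \<noteq> {}"
    and "field_involution cj"
  shows "pos_def_lpa V E1 s r cj \<longleftrightarrow> pos_def_field cj"
proof -
  interpret lpa_graph V E1 s r by (rule lpa_graph.intro) (rule assms(1))
  show ?thesis
    using pos_def_field_if_pos_def_lpa[OF assms(2,3)] pos_def_lpa_if_pos_def_field[OF assms(3)] by blast
qed

end
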